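(* Let $m\ge3$, $C$ a set of $m$ candidates, $T$ the set of all $m!$ strict rankings of $C$, and $w=(w_1,\dots,w_m)$ with $1=w_1\ge\cdots\ge w_m=0$; for $t\in T$, $\alpha\in C$ let $\sigma_t(\alpha)=w_i$ where $i$ is the position of $\alpha$ in $t$. Suppose $n$ voters each independently choose a ranking uniformly from $T$, let $N_t$ be the number choosing $t$, and $|\alpha|=\sum_t N_t\sigma_t(\alpha)$. Let $K=2\,m!\,(1-w_{m-1})^{-1}$ if $w_{m-1}<1$ and $K=0$ if $w_{m-1}=1$. On the event that some candidate $a$ has $|a|>|\alpha|$ for all $\alpha\neq a$, define for each $\beta\ne a$ the quantity $Q_3(\beta)$ as the optimal value (or $+\infty$ if infeasible) of the linear program: minimize $\sum_{t\in\bar T_{\beta a}}x_t$ over real $x_t$ ($t\in\bar T_{\beta a}$), $y_t$ ($t\in T_\beta$) subject to $$\sum_{t\in T_\beta}y_t(1-\sigma_t(\alpha))-\sum_{t\in\bar T_{\beta a}}x_t(\sigma_t(\beta)-\sigma_t(\alpha))\ge|\alpha|-|\beta|\quad\forall\alpha\ne\beta,$$ $\sum_{t\in T_\beta}y_t=\sum_{t\in\bar T_{\beta a}}x_t$, $x_t\ge0$, $y_t\ge0$, where $\bar T_{\beta a}$ is the set of types ranking $\beta$ above $a$ and $T_\beta$ the set of types ranking $\beta$ first. Then $$\mathbb{P}\Bigl(\bigl|\mathrm{MCS}-\min_{\beta\ne a}Q_3(\beta)\bigr|\le K\Bigr)\to1\qquad\text{as }n\to\infty,$$ where $\mathrm{MCS}$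 is the minimum manipulating coalition size defined in the context.
   Context: Minimum manipulating coalition size: for a voting situation in which a candidate $a$ has strictly the largest score, a manipulating coalition is a set of voters, all of whom sincerely rank some common candidate $\beta\ne a$ above $a$, such that if these voters replace their sincere rankings by some other rankings (all other voters voting sincerely), the resulting score of $\beta$ is at least the resulting score of every other candidate. $\mathrm{MCS}$ is the minimum number of voters in such a coalition, or $+\infty$ if none exists. The event in the claim is understood to include the existence of such a unique top scorer $a$, and the inequality is regarded as holding when both $\mathrm{MCS}$ and $\min_{\beta\ne a}Q_3(\beta)$ equal $+\infty$. *)

theory Defs
  imports "HOL-Probability.Probability" "HOL-Combinatorics.Multiset_Permutations"
begin

(* Rankings of a candidate set C: lists listing each candidate exactly once
   (first element = top). T = permutations_of_set C, |T| = m!. *)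

definition pos :: "'c list \<Rightarrow> 'c \<Rightarrow> nat" where
  "pos t al = Suc (LEAST i. i < length t \<and> t ! i = al)"

(* sigma_t(alpha) = w_i where i is the position of alpha in t (w indexed 1..m) *)
definition sigma :: "(nat \<Rightarrow> real) \<Rightarrow> 'c list \<Rightarrow> 'c \<Rightarrow> real" where
  "sigma w t al = w (pos t al)"

definition ranks_above :: "'c list \<Rightarrow> 'c \<Rightarrow> 'c \<Rightarrow> bool" where
  "ranks_above t b a \<longleftrightarrow> pos t b < pos t a"

definition profiles :: "'c set \<Rightarrow> nat \<Rightarrow> (nat \<Rightarrow> 'c list) set" where
  "profiles C n = PiE {..<n} (\<lambda>_. permutations_of_set C)"

definition Ncount :: "nat \<Rightarrow> (nat \<Rightarrow> 'c list) \<Rightarrow> 'c list \<Rightarrow> nat" where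
  "Ncount n P t = card {i \<in> {..<n}. P i = t}"

definition score :: "'c set \<Rightarrow> (nat \<Rightarrow> real) \<Rightarrow> nat \<Rightarrow> (nat \<Rightarrow> 'c list) \<Rightarrow> 'c \<Rightarrow> real" where
  "score C w n P al = (\<Sum>t\<in>permutations_of_set C. real (Ncount n P t) * sigma w t al)"

definition manip_coalition ::
  "'c set \<Rightarrow> (nat \<Rightarrow> real) \<Rightarrow> nat \<Rightarrow> (nat \<Rightarrow> 'c list) \<Rightarrow> 'c \<Rightarrow> nat set \<Rightarrow> bool" where
  "manip_coalition C w n P a S \<longleftrightarrow> S \<subseteq> {..<n} \<and>
     (\<exists>b\<in>C. b \<noteq> a \<and> (\<forall>i\<in>S. ranks_above (P i) b a) \<and>
        (\<exists>Q. (\<forall>i<n. Q i \<in> permutations_of_set C) \<and> (\<forall>i<n. i \<notin> S \<longrightarrow> Q i = P i) \<and>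
             (\<forall>al\<in>C. score C w n Q al \<le> score C w n Q b)))"

(* minimum manipulating coalition size, +infinity if none *)
definition MCS :: "'c set \<Rightarrow> (nat \<Rightarrow> real) \<Rightarrow> nat \<Rightarrow> (nat \<Rightarrow> 'c list) \<Rightarrow> 'c \<Rightarrow> ereal" where
  "MCS C w n P a = Inf {ereal (real (card S)) | S. manip_coalition C w n P a S}"

definition T_first :: "'c set \<Rightarrow> 'c \<Rightarrow> 'c list set" where
  "T_first C b = {t \<in> permutations_of_set C. pos t b = 1}"

definition T_above :: "'c set \<Rightarrow> 'c \<Rightarrow> 'c \<Rightarrow> 'c list set" where
  "T_above C b a = {t \<in> permutations_of_set C. ranks_above t b a}"

definition Q3_feasible ::
  "'c set \<Rightarrow> (nat \<Rightarrow> real) \<Rightarrow> nat \<Rightarrow> (nat \<Rightarrow> 'c list) \<Rightarrow> 'c \<Rightarrow> 'c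
     \<Rightarrow> ('c list \<Rightarrow> real) \<Rightarrow> ('c list \<Rightarrow> real) \<Rightarrow> bool" where
  "Q3_feasible C w n P a b x y \<longleftrightarrow>
     (\<forall>al\<in>C. al \<noteq> b \<longrightarrow>
        (\<Sum>t\<in>T_first C b. y t * (1 - sigma w t al))
          - (\<Sum>t\<in>T_above C b a. x t * (sigma w t b - sigma w t al))
          \<ge> score C w n P al - score C w n P b) \<and>
     (\<Sum>t\<in>T_first C b. y t) = (\<Sum>t\<in>T_above C b a. x t) \<and>
     (\<forall>t\<in>T_above C b a. x t \<ge> 0) \<and> (\<forall>t\<in>T_first C b. y t \<ge> 0)"

(* optimal value of the LP, +infinity if infeasible *)
definition Q3 :: "'c set \<Rightarrow> (nat \<Rightarrow> real) \<Rightarrow> nat \<Rightarrow> (nat \<Rightarrow> 'c list) \<Rightarrow> 'c \<Rightarrow> 'c \<Rightarrow> ereal" where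
  "Q3 C w n P a b = Inf {ereal (\<Sum>t\<in>T_above C b a. x t) | x y. Q3_feasible C w n P a b x y}"

definition ereal_close :: "real \<Rightarrow> ereal \<Rightarrow> ereal \<Rightarrow> bool" where
  "ereal_close K X Y \<longleftrightarrow> (X = \<infinity> \<and> Y = \<infinity>) \<or>
     (X \<noteq> \<infinity> \<and> Y \<noteq> \<infinity> \<and> X \<noteq> -\<infinity> \<and> Y \<noteq> -\<infinity> \<and>
      \<bar>real_of_ereal X - real_of_ereal Y\<bar> \<le> K)"

definition Kconst :: "nat \<Rightarrow> (nat \<Rightarrow> real) \<Rightarrow> real" where
  "Kconst m w = (if w (m - 1) < 1 then 2 * fact m / (1 - w (m - 1)) else 0)"

definition good_event :: "'c set \<Rightarrow> (nat \<Rightarrow> real) \<Rightarrow> nat \<Rightarrow> (nat \<Rightarrow> 'c list) set" where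
  "good_event C w n = {P \<in> profiles C n. \<exists>a\<in>C.
      (\<forall>al\<in>C. al \<noteq> a \<longrightarrow> score C w n P al < score C w n P a) \<and>
      ereal_close (Kconst (card C) w) (MCS C w n P a) (Min ((Q3 C w n P a) ` (C - {a})))}"

end

theory Submission
  imports Defs
begin

lemma pos_eqI:
  assumes "distinct xs" "k < length xs" "xs ! k = al"
  shows "pos xs al = Suc k"
proof -
  have "(LEAST i. i < length xs \<and> xs ! i = al) = k"
    by (rule Least_equality) (use assms nth_eq_iff_index_eq in fastforce)+
  then show ?thesis
    unfolding pos_def by simp
qed

lemma pos_bounds:
  assumes "distinct xs" "al \<in> set xs"
  shows "1 \<le> pos xs al" "pos xs al \<le> length xs" "xs ! (pos xs al - 1) = al"
proof -
  obtain k where "k < length xs" "xs ! k = al"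
    using assms(2) by (auto simp: in_set_conv_nth)
  with pos_eqI[OF assms(1) this] show "1 \<le> pos xs al" "pos xs al \<le> length xs" "xs ! (pos xs al - 1) = al"
    by auto
qed

lemma inj_on_pos: "distinct xs \<Longrightarrow> inj_on (pos xs) (set xs)"
  by (metis inj_onI pos_bounds(3))

lemma pos_eq_length_iff:
  assumes "distinct xs" "al \<in> set xs"
  shows "pos xs al = length xs \<longleftrightarrow> al = last xs"
proof
  assume "pos xs al = length xs"
  moreover have "xs \<noteq> []"
    using assms(2) by auto
  ultimately show "al = last xs"
    using pos_bounds(3)[OF assms] by (metis last_conv_nth)
next
  assume "al = last xs"
  moreover have "xs \<noteq> []"
    using assms(2) by auto
  ultimately show "pos xs al = length xs"
    using pos_eqI[OF assms(1), of "length xs - 1" al] by (simp add: last_conv_nth)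
qed

lemma pos_Cons_self: "pos (a # xs) a = 1"
proof -
  have "(LEAST i. i < length (a # xs) \<and> (a # xs) ! i = a) = 0"
    by (rule Least_equality) auto
  then show ?thesis
    unfolding pos_def by simp
qed

lemma pos_append_left:
  assumes "distinct (xs @ ys)" "al \<in> set xs"
  shows "pos (xs @ ys) al = pos xs al"
proof -
  obtain k where k: "k < length xs" "xs ! k = al"
    using assms(2) by (auto simp: in_set_conv_nth)
  have "pos (xs @ ys) al = Suc k"
    by (rule pos_eqI) (use assms k in \<open>auto simp: nth_append\<close>)
  also have "\<dots> = pos xs al"
    by (rule pos_eqI[symmetric]) (use assms k in auto)
  finally show ?thesis .
qed

lemma pos_append_right:
  assumes "distinct (xs @ ys)" "al \<in> set ys"
  shows "pos (xs @ ys) al = length xs + pos ys al"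
proof -
  obtain k where k: "k < length ys" "ys ! k = al"
    using assms(2) by (auto simp: in_set_conv_nth)
  have "pos (xs @ ys) al = Suc (length xs + k)"
    by (rule pos_eqI) (use assms k in \<open>auto simp: nth_append\<close>)
  also have "\<dots> = length xs + pos ys al"
    using pos_eqI[of ys k al] assms k by simp
  finally show ?thesis .
qed

lemma pos_map_inj:
  assumes "inj f" "distinct xs" "al \<in> set xs"
  shows "pos (map f xs) (f al) = pos xs al"
proof -
  obtain k where k: "k < length xs" "xs ! k = al"
    using assms(3) by (auto simp: in_set_conv_nth)
  have "pos (map f xs) (f al) = Suc k"
    by (rule pos_eqI) (use assms k inj_on_subset[OF assms(1) subset_UNIV] in \<open>auto simp: distinct_map\<close>)
  also have "\<dots> = pos xs al"
    by (rule pos_eqI[symmetric]) (use assms k in auto)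
  finally show ?thesis .
qed

lemma pos_permutation_bounds:
  assumes "t \<in> permutations_of_set C" "al \<in> C"
  shows "1 \<le> pos t al" "pos t al \<le> card C"
  using pos_bounds[of t al] assms length_finite_permutations_of_set[OF assms(1)]
  by (auto dest: permutations_of_setD)

lemma ex_permutation_with_suffix:
  assumes "finite C" "distinct xs" "set xs \<subseteq> C"
  obtains ys where "ys @ xs \<in> permutations_of_set C"
proof -
  obtain ys where "distinct ys" "set ys = C - set xs"
    using finite_distinct_list[of "C - set xs"] assms(1) by auto
  with assms have "ys @ xs \<in> permutations_of_set C"
    by (auto simp: permutations_of_set_def)
  then show ?thesis ..
qed

lemma ex_permutation_with_prefix:
  assumes "finite C" "distinct xs" "set xs \<subseteq> C"
  obtains ys where "xs @ ys \<in> permutations_of_set C"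
proof -
  obtain ys where "distinct ys" "set ys = C - set xs"
    using finite_distinct_list[of "C - set xs"] assms(1) by auto
  with assms have "xs @ ys \<in> permutations_of_set C"
    by (auto simp: permutations_of_set_def)
  then show ?thesis ..
qed

definition move_to_front :: "'c \<Rightarrow> 'c list \<Rightarrow> 'c list" where
  "move_to_front b q = b # remove1 b q"

lemma move_to_front_permutation:
  "q \<in> permutations_of_set C \<Longrightarrow> b \<in> C \<Longrightarrow> move_to_front b q \<in> permutations_of_set C"
  by (auto simp: move_to_front_def permutations_of_set_def)

lemma pos_move_to_front_self: "pos (move_to_front b q) b = 1"
  by (simp add: move_to_front_def pos_Cons_self)

lemma pos_move_to_front_other:
  assumes "distinct q" "b \<in> set q" "al \<in> set q" "al \<noteq> b"
  shows "pos q al \<le> pos (move_to_front b q) al"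
proof -
  obtain ys zs where q: "q = ys @ b # zs"
    using split_list[OF assms(2)] by blast
  have d: "distinct ((b # ys) @ zs)"
    using assms(1) q by auto
  have mtf: "move_to_front b q = (b # ys) @ zs"
    using assms(1) q by (simp add: move_to_front_def remove1_append)
  consider "al \<in> set ys" | "al \<in> set zs"
    using assms(3,4) q by auto
  then show ?thesis
  proof cases
    case 1
    then have "pos q al = pos ys al"
      using assms(1) q pos_append_left[of ys "b # zs" al] by simp
    moreover have "pos (move_to_front b q) al = Suc (pos ys al)"
      using 1 d pos_append_left[OF d] pos_append_right[of "[b]" ys al] by (simp add: mtf)
    ultimately show ?thesis by simp
  next
    case 2
    then have "pos q al = length ys + Suc (pos zs al)"
      using assms(1,4) q pos_append_right[of ys "b # zs" al] pos_append_right[of "[b]" zs al]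
      by simp
    moreover have "pos (move_to_front b q) al = Suc (length ys) + pos zs al"
      using 2 pos_append_right[OF d] by (simp add: mtf)
    ultimately show ?thesis by simp
  qed
qed

lemma sum_by_fibre_card:
  fixes h :: "'b \<Rightarrow> 'c::comm_semiring_1"
  assumes "finite S" "g ` S \<subseteq> U" "finite U"
  shows "(\<Sum>i\<in>S. h (g i)) = (\<Sum>u\<in>U. of_nat (card {i\<in>S. g i = u}) * h u)"
proof -
  have "(\<Sum>i\<in>S. h (g i)) = (\<Sum>u\<in>U. \<Sum>i\<in>{i\<in>S. g i = u}. h (g i))"
    using sum.group[OF assms(1,3,2), of "\<lambda>i. h (g i)"] by simp
  also have "\<dots> = (\<Sum>u\<in>U. \<Sum>i\<in>{i\<in>S. g i = u}. h u)"
    by (intro sum.cong refl) auto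
  also have "\<dots> = (\<Sum>u\<in>U. of_nat (card {i\<in>S. g i = u}) * h u)"
    by simp
  finally show ?thesis .
qed

lemma ex_map_with_fibre_cards:
  assumes "finite U" "finite S" "(\<Sum>u\<in>U. Y u) = card S"
  obtains f where "\<forall>i\<in>S. f i \<in> U" "\<forall>u\<in>U. card {i\<in>S. f i = u} = Y u"
  using assms(1,3,2)
proof (induction U arbitrary: S thesis rule: finite_induct)
  case empty
  then show ?case by auto
next
  case (insert u U)
  have "Y u \<le> card S"
    using insert by simp
  then obtain S1 where S1: "S1 \<subseteq> S" "card S1 = Y u"
    by (meson obtain_subset_with_card_n)
  have "(\<Sum>u\<in>U. Y u) = card (S - S1)"
    using insert S1 card_Diff_subset[OF finite_subset[OF S1(1)] S1(1)] by simp
  then obtain f where f: "\<forall>i\<in>S - S1. f i \<in> U" "\<forall>v\<in>U. card {i\<in>S - S1. f i = v} = Y v"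
    using insert.IH insert.prems(3) by blast
  define g where "g i = (if i \<in> S1 then u else f i)" for i
  show ?case
  proof (rule insert.prems(1)[of g])
    show "\<forall>i\<in>S. g i \<in> insert u U"
      using f by (auto simp: g_def)
    have "{i\<in>S. g i = u} = S1"
      using f(1) insert.hyps(2) S1(1) by (auto simp: g_def)
    moreover have "{i\<in>S. g i = v} = {i\<in>S - S1. f i = v}" if "v \<noteq> u" for v
      using that by (auto simp: g_def)
    ultimately show "\<forall>v\<in>insert u U. card {i\<in>S. g i = v} = Y v"
      using f(2) S1(2) insert.hyps(2) by (metis insert_iff)
  qed
qed

lemma ex_nat_le_with_sum:
  assumes "finite U" "N \<le> (\<Sum>u\<in>U. B u)"
  obtains Y :: "'a \<Rightarrow> nat" where "\<forall>u\<in>U. Y u \<le> B u" "(\<Sum>u\<in>U. Y u) = N"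
  using assms
proof (induction U arbitrary: N thesis rule: finite_induct)
  case empty
  then show ?case by auto
next
  case (insert u U)
  show ?case
  proof (cases "N \<le> (\<Sum>v\<in>U. B v)")
    case True
    then obtain Y where Y: "\<forall>v\<in>U. Y v \<le> B v" "(\<Sum>v\<in>U. Y v) = N"
      using insert.IH by blast
    have "(\<Sum>v\<in>U. (Y(u := 0)) v) = N"
      using Y(2) insert.hyps by (metis (no_types, lifting) fun_upd_other sum.cong)
    then show ?thesis
      using insert Y by (intro insert.prems(1)[of "Y(u := 0)"]) auto
  next
    case False
    have "(\<Sum>v\<in>U. (B(u := N - (\<Sum>v\<in>U. B v))) v) = (\<Sum>v\<in>U. B v)"
      using insert.hyps by (metis (no_types, lifting) fun_upd_other sum.cong)
    then show ?thesis
      using insert False by (intro insert.prems(1)[of "B(u := N - (\<Sum>v\<in>U. B v))"]) auto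
  qed
qed

lemma ex_nat_le_neg_part_with_sum:
  fixes g :: "'a \<Rightarrow> int"
  assumes "finite A" "sum g A \<le> 0"
  obtains d :: "'a \<Rightarrow> nat" where "\<forall>a\<in>A. d a \<le> nat (- g a)" "sum d A = (\<Sum>a\<in>A. nat (g a))"
proof -
  have "int (\<Sum>a\<in>A. nat (g a)) - int (\<Sum>a\<in>A. nat (- g a)) = sum g A"
    by (simp add: sum_subtractf[symmetric]) (intro sum.cong refl, simp)
  then have "(\<Sum>a\<in>A. nat (g a)) \<le> (\<Sum>a\<in>A. nat (- g a))"
    using assms(2) by linarith
  then show ?thesis
    using ex_nat_le_with_sum[OF assms(1)] that by blast
qed

lemma sum_mult_diff_le_pos_part:
  fixes y z c :: "'a \<Rightarrow> real"
  assumes "\<forall>u\<in>U. 0 \<le> c u \<and> c u \<le> 1"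
  shows "(\<Sum>u\<in>U. y u * c u) - (\<Sum>u\<in>U. z u * c u) \<le> (\<Sum>u\<in>U. max 0 (y u - z u))"
proof -
  have "(\<Sum>u\<in>U. y u * c u) - (\<Sum>u\<in>U. z u * c u) = (\<Sum>u\<in>U. (y u - z u) * c u)"
    by (simp add: sum_subtractf left_diff_distrib)
  also have "\<dots> \<le> (\<Sum>u\<in>U. max 0 (y u - z u))"
    using assms by (intro sum_mono) (auto simp: max_def mult_left_le mult_nonpos_nonneg)
  finally show ?thesis .
qed

lemma sum_mult_perturb_le:
  fixes X x d :: "'a \<Rightarrow> real"
  assumes "\<forall>t\<in>A. \<bar>X t - x t\<bar> \<le> 1" "\<forall>t\<in>A. \<bar>d t\<bar> \<le> 1"
  shows "(\<Sum>t\<in>A. X t * d t) \<le> (\<Sum>t\<in>A. x t * d t) + real (card A)"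
proof -
  have "(\<Sum>t\<in>A. (X t - x t) * d t) \<le> (\<Sum>t\<in>A. 1)"
  proof (rule sum_mono)
    fix t
    assume "t \<in> A"
    then have "\<bar>(X t - x t) * d t\<bar> \<le> 1"
      unfolding abs_mult using assms by (intro mult_le_one) auto
    then show "(X t - x t) * d t \<le> 1"
      by (simp add: abs_le_iff)
  qed
  then show ?thesis
    by (simp add: left_diff_distrib sum_subtractf)
qed

lemma ex_rounding_with_sum:
  fixes y :: "'a \<Rightarrow> real"
  assumes U: "finite U" "U \<noteq> {}" and y: "\<forall>u\<in>U. 0 \<le> y u"
    and D: "sum y U - real N \<le> D" "real (card U) \<le> D"
  obtains Y :: "'a \<Rightarrow> nat" where "sum Y U = N" "(\<Sum>u\<in>U. max 0 (y u - real (Y u))) \<le> D"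
proof -
  define F where "F u = nat \<lfloor>y u\<rfloor>" for u
  have F: "real (F u) \<le> y u" "y u - real (F u) \<le> 1" if "u \<in> U" for u
    using y that by (auto simp: F_def) linarith+
  \<comment> \<open>round down below \<open>F\<close>, then put the missing mass on a single point\<close>
  obtain Y' where Y': "\<forall>u\<in>U. Y' u \<le> F u" "sum Y' U = min N (sum F U)"
    using ex_nat_le_with_sum[OF U(1), of "min N (sum F U)" F] by auto
  obtain u0 where u0: "u0 \<in> U"
    using U(2) by blast
  define Y where "Y = Y'(u0 := Y' u0 + (N - sum F U))"
  have "sum Y U = min N (sum F U) + (N - sum F U)"
    using u0 U(1) Y'(2) by (simp add: Y_def sum.remove[of U u0] algebra_simps)
  then have sum_Y: "sum Y U = N"
    by simp
  have "max 0 (y u - real (Y u)) \<le> y u - real (Y' u)" if "u \<in> U" for u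
  proof -
    have "real (Y' u) \<le> y u"
      using Y'(1) F(1) that by (meson of_nat_le_iff order_trans)
    moreover have "real (Y' u) \<le> real (Y u)"
      by (simp add: Y_def)
    ultimately show ?thesis
      by simp
  qed
  then have "(\<Sum>u\<in>U. max 0 (y u - real (Y u))) \<le> (\<Sum>u\<in>U. y u - real (Y' u))"
    by (rule sum_mono)
  also have "\<dots> = sum y U - real (min N (sum F U))"
    using Y'(2) by (simp add: sum_subtractf flip: of_nat_sum)
  also have "\<dots> \<le> D"
  proof (cases "N \<le> sum F U")
    case False
    have "sum y U - real (sum F U) \<le> real (card U)"
      using F(2) sum_mono[of U "\<lambda>u. y u - real (F u)" "\<lambda>_. 1"] by (simp add: sum_subtractf)
    then show ?thesis
      using False D(2) by simp
  qed (use D(1) in simp)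
  finally show ?thesis
    by (rule that[OF sum_Y])
qed

definition central_binomial_prob :: "nat \<Rightarrow> real" where
  "central_binomial_prob k = real (k choose (k div 2)) / 2 ^ k"

lemma central_binomial_prob_le_1: "central_binomial_prob k \<le> 1"
  using binomial_le_pow2[of k "k div 2"] by (simp add: central_binomial_prob_def divide_le_eq_1)

lemma central_binomial_Suc: "Suc j * (2 * Suc j choose Suc j) = 2 * (2 * j + 1) * (2 * j choose j)"
proof -
  have "Suc j * (2 * Suc j choose Suc j) = 2 * (Suc j * (Suc (2 * j) choose j))"
    using Suc_times_binomial[of j "Suc (2 * j)"] by simp
  also have "Suc j * (Suc (2 * j) choose j) = Suc (2 * j) * (2 * j choose j)"
    using binomial_absorb_comp[of "Suc (2 * j)" j] by (simp add: Suc_diff_le)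
  finally show ?thesis by simp
qed

lemma central_binomial_sq_le: "(real (2 * j choose j) / 4 ^ j)\<^sup>2 \<le> 1 / (real j + 1)"
proof (induction j)
  case 0
  then show ?case by simp
next
  case (Suc j)
  define B where "B = real (2 * j choose j)"
  define B' where "B' = real (2 * Suc j choose Suc j)"
  have "real (Suc j * (2 * Suc j choose Suc j)) = real (2 * (2 * j + 1) * (2 * j choose j))"
    by (simp only: central_binomial_Suc)
  then have "B' = 2 * (2 * j + 1) * B / (j + 1)"
    unfolding B_def B'_def of_nat_mult by (simp add: field_simps del: binomial_Suc_Suc)
  then have "B' / 4 ^ Suc j = B / 4 ^ j * ((2 * j + 1) / (2 * j + 2))"
    by (simp add: divide_simps) (simp add: algebra_simps)
  then have "(B' / 4 ^ Suc j)\<^sup>2 = (B / 4 ^ j)\<^sup>2 * ((2 * j + 1) / (2 * j + 2))\<^sup>2"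
    by (simp only: power_mult_distrib)
  also have "\<dots> \<le> 1 / (real j + 1) * ((2 * j + 1) / (2 * j + 2))\<^sup>2"
    using Suc.IH unfolding B_def by (rule mult_right_mono) simp
  also have "\<dots> \<le> 1 / (real (Suc j) + 1)"
    by (simp add: divide_simps power2_eq_square) (simp add: algebra_simps)
  finally show ?case
    by (simp only: B'_def)
qed

lemma binomial_odd_le_central: "Suc (2 * j) choose j \<le> 2 * (2 * j choose j)"
proof (cases j)
  case (Suc i)
  then have "Suc (2 * j) choose j = (2 * j choose i) + (2 * j choose j)"
    by simp
  also have "\<dots> \<le> 2 * (2 * j choose j)"
    using binomial_maximum'[of j i] by simp
  finally show ?thesis .
qed simp

lemma central_binomial_prob_le_sqrt:
  assumes "r \<le> real k" "r > 0"
  shows "central_binomial_prob k \<le> sqrt (2 / r)"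
proof (rule real_le_rsqrt)
  define j where "j = k div 2"
  have "central_binomial_prob k \<le> real (2 * j choose j) / 4 ^ j"
  proof (cases "even k")
    case True
    then show ?thesis
      by (auto simp: central_binomial_prob_def j_def power_mult elim!: evenE)
  next
    case False
    then have "k = Suc (2 * j)"
      by (simp add: j_def)
    then have "central_binomial_prob k = real (Suc (2 * j) choose j) / 4 ^ j / 2"
      by (simp add: central_binomial_prob_def power_mult)
    moreover have "real (Suc (2 * j) choose j) \<le> 2 * real (2 * j choose j)"
      using binomial_odd_le_central[of j] by (metis of_nat_le_iff of_nat_mult of_nat_numeral)
    ultimately show ?thesis
      by (simp add: field_simps)
  qed
  moreover have "0 \<le> central_binomial_prob k"
    by (simp add: central_binomial_prob_def)
  ultimately have "(central_binomial_prob k)\<^sup>2 \<le> (real (2 * j choose j) / 4 ^ j)\<^sup>2"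
    by (rule power_mono)
  also have "\<dots> \<le> 1 / (real j + 1)"
    by (rule central_binomial_sq_le)
  also have "\<dots> \<le> 2 / r"
    using assms unfolding j_def by (simp add: divide_simps)
  finally show "(central_binomial_prob k)\<^sup>2 \<le> 2 / r" .
qed

lemma card_family_same_card_le:
  assumes "finite G" "F \<subseteq> Pow G" "\<forall>B\<in>F. \<forall>B'\<in>F. card B = card B'"
  shows "card F \<le> card G choose (card G div 2)"
proof (cases "F = {}")
  case False
  then obtain B0 where "B0 \<in> F"
    by blast
  then have "F \<subseteq> {B. B \<subseteq> G \<and> card B = card B0}"
    using assms(2,3) by blast
  then have "card F \<le> card {B. B \<subseteq> G \<and> card B = card B0}"
    using assms(1) by (intro card_mono) auto
  also have "\<dots> = card G choose card B0"
    by (rule n_subsets[OF assms(1)])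
  also have "\<dots> \<le> card G choose (card G div 2)"
    by (rule binomial_maximum)
  finally show ?thesis .
qed simp

lemma card_subsets_with_sum_le:
  fixes D :: "'a \<Rightarrow> real"
  assumes N: "finite N" and G: "G \<subseteq> N" and D1: "\<forall>i\<in>G. D i = 1"
  shows "card {J \<in> Pow N. sum D J = c} \<le> 2 ^ (card N - card G) * (card G choose (card G div 2))"
proof -
  define R where "R = N - G"
  define F where "F J2 = {J1 \<in> Pow G. sum D (J1 \<union> J2) = c}" for J2
  have finG: "finite G" and finR: "finite R"
    using N G finite_subset by (auto simp: R_def)
  have card_J1: "real (card J1) = c - sum D J2" if "J2 \<subseteq> R" "J1 \<in> F J2" for J1 J2
  proof -
    have J1: "J1 \<subseteq> G" "J1 \<inter> J2 = {}" "finite J1"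
      using that finite_subset[OF _ finG] by (auto simp: F_def R_def)
    then have "sum D (J1 \<union> J2) = real (card J1) + sum D J2"
      using D1 finite_subset[OF \<open>J2 \<subseteq> R\<close> finR] by (simp add: sum.union_disjoint subset_iff)
    then show ?thesis
      using that by (simp add: F_def)
  qed
  have F_le: "card (F J2) \<le> card G choose (card G div 2)" if "J2 \<subseteq> R" for J2
  proof (rule card_family_same_card_le[OF finG])
    show "F J2 \<subseteq> Pow G"
      by (auto simp: F_def)
    have "card B = card B'" if "B \<in> F J2" "B' \<in> F J2" for B B'
      using card_J1[OF \<open>J2 \<subseteq> R\<close> that(1)] card_J1[OF \<open>J2 \<subseteq> R\<close> that(2)] by linarith
    then show "\<forall>B\<in>F J2. \<forall>B'\<in>F J2. card B = card B'"
      by blast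
  qed
  have "inj_on (\<lambda>J. (J - G, J \<inter> G)) {J \<in> Pow N. sum D J = c}"
    by (rule inj_onI) (metis Diff_partition Int_Diff_Un prod.inject)
  moreover have "(\<lambda>J. (J - G, J \<inter> G)) ` {J \<in> Pow N. sum D J = c} \<subseteq> Sigma (Pow R) F"
    by (auto simp: F_def R_def Int_Diff_Un)
  ultimately have "card {J \<in> Pow N. sum D J = c} \<le> card (Sigma (Pow R) F)"
    using finR finG by (intro card_inj_on_le) (auto simp: F_def intro!: finite_SigmaI)
  also have "\<dots> = (\<Sum>J2\<in>Pow R. card (F J2))"
    using finR finG by (intro card_SigmaI) (auto simp: F_def)
  also have "\<dots> \<le> (\<Sum>J2\<in>Pow R. card G choose (card G div 2))"
    by (intro sum_mono F_le) auto
  also have "\<dots> = 2 ^ (card N - card G) * (card G choose (card G div 2))"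
    using finR finG G by (simp add: card_Pow R_def card_Diff_subset)
  finally show ?thesis .
qed

lemma ex_subset_with_fibre_cards:
  assumes "finite U" "\<forall>t\<in>U. X t \<le> card {i\<in>V. g i = t}" "finite V"
  obtains S where "S \<subseteq> V" "\<forall>i\<in>S. g i \<in> U" "\<forall>t\<in>U. card {i\<in>S. g i = t} = X t" "card S = sum X U"
proof -
  have "\<forall>t\<in>U. \<exists>St. St \<subseteq> {i\<in>V. g i = t} \<and> card St = X t"
    using assms(2) by (meson obtain_subset_with_card_n)
  then obtain SS where SS: "\<And>t. t \<in> U \<Longrightarrow> SS t \<subseteq> {i\<in>V. g i = t} \<and> card (SS t) = X t"
    by metis
  define S where "S = (\<Union>t\<in>U. SS t)"
  have S: "S \<subseteq> V" "\<forall>i\<in>S. g i \<in> U"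
    using SS by (auto simp: S_def)
  have fibres: "\<forall>t\<in>U. card {i\<in>S. g i = t} = X t"
  proof
    fix t
    assume "t \<in> U"
    then have "{i\<in>S. g i = t} = SS t"
      using SS by (auto simp: S_def)
    then show "card {i\<in>S. g i = t} = X t"
      using SS \<open>t \<in> U\<close> by simp
  qed
  have "card S = (\<Sum>t\<in>U. card {i\<in>S. g i = t})"
    using sum_by_fibre_card[OF finite_subset[OF S(1) assms(3)] _ assms(1), where h = "\<lambda>_. 1::nat"] S(2)
    by auto
  with S fibres show ?thesis
    by (intro that) simp_all
qed

lemma sum_add_delta_mult:
  fixes c :: "'a \<Rightarrow> real"
  assumes "finite U" "u0 \<in> U"
  shows "(\<Sum>u\<in>U. (f u + (if u = u0 then k else 0)) * c u) = (\<Sum>u\<in>U. f u * c u) + k * c u0"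
proof -
  have "(\<Sum>u\<in>U. (f u + (if u = u0 then k else 0)) * c u) = (\<Sum>u\<in>U. f u * c u + (if u = u0 then k * c u else 0))"
    by (intro sum.cong) (auto simp: algebra_simps)
  also have "\<dots> = (\<Sum>u\<in>U. f u * c u) + k * c u0"
    using assms by (simp add: sum.distrib)
  finally show ?thesis .
qed

lemma sum_max_0_diff_le:
  fixes X Y :: "'a \<Rightarrow> real"
  assumes "\<forall>al\<in>A. 0 \<le> X al" "\<forall>al\<in>A. 0 \<le> Y al" "sum Y A = sum X A"
  shows "(\<Sum>al\<in>A. max 0 (Y al - X al)) \<le> sum X A"
proof -
  have "(\<Sum>al\<in>A. max 0 (Y al - X al)) - (\<Sum>al\<in>A. max 0 (X al - Y al)) = sum Y A - sum X A"
    by (simp add: sum_subtractf[symmetric]) (intro sum.cong refl, simp add: max_def)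
  moreover have "(\<Sum>al\<in>A. max 0 (X al - Y al)) \<le> sum X A"
    using assms(1,2) by (intro sum_mono) auto
  ultimately show ?thesis
    using assms(3) by linarith
qed

lemma sum_fibre_of_section:
  assumes "finite T" "\<forall>al\<in>A. s al \<in> T \<and> f (s al) = al" "al \<in> A"
  shows "(\<Sum>t\<in>{t\<in>T. f t = al}. if t \<in> s ` A then h (f t) else 0) = h al"
proof -
  have "(\<Sum>t\<in>{t\<in>T. f t = al}. if t \<in> s ` A then h (f t) else 0) =
      (\<Sum>t\<in>{t\<in>T. f t = al}. if t = s al then h al else 0)"
    using assms(2,3) by (intro sum.cong refl) auto
  also have "\<dots> = h al"
    using assms by simp
  finally show ?thesis .
qed

lemma ex_strict_argmax:
  fixes f :: "'a \<Rightarrow> 'b::linorder"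
  assumes "finite A" "A \<noteq> {}" "inj_on f A"
  obtains a where "a \<in> A" "\<forall>x\<in>A. x \<noteq> a \<longrightarrow> f x < f a"
proof -
  have "Max (f ` A) \<in> f ` A"
    using assms(1,2) by simp
  then obtain a where a: "a \<in> A" "Max (f ` A) = f a"
    by blast
  have "f x < f a" if "x \<in> A" "x \<noteq> a" for x
  proof -
    have "f x \<le> f a"
      using Max_ge[of "f ` A" "f x"] assms(1) that a(2) by simp
    moreover have "f x \<noteq> f a"
      using inj_onD[OF assms(3)] that a(1) by blast
    ultimately show ?thesis
      by simp
  qed
  then show ?thesis
    using that a(1) by blast
qed

locale scoring_rule =
  fixes C :: "'c set" and w :: "nat \<Rightarrow> real"
  assumes finite_C: "finite C" and card_C: "card C \<ge> 3"
    and w_first: "w 1 = 1" and w_last: "w (card C) = 0"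
    and w_antimono: "\<And>i j. 1 \<le> i \<Longrightarrow> i \<le> j \<Longrightarrow> j \<le> card C \<Longrightarrow> w j \<le> w i"
begin

abbreviation rankings :: "'c list set" where
  "rankings \<equiv> permutations_of_set C"

abbreviation w_penult :: real where
  "w_penult \<equiv> w (card C - 1)"

lemma finite_rankings: "finite rankings"
  by simp

lemma rankings_nonempty: "rankings \<noteq> {}"
  using finite_C by simp

lemma card_rankings_pos: "0 < card rankings"
  using finite_C by (simp add: card_gt_0_iff)

lemma w_bounds: "1 \<le> i \<Longrightarrow> i \<le> card C \<Longrightarrow> 0 \<le> w i \<and> w i \<le> 1"
  using w_antimono[of i "card C"] w_antimono[of 1 i] w_first w_last by auto

lemma w_penult_bounds: "0 \<le> w_penult" "w_penult \<le> 1"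
  using w_bounds[of "card C - 1"] card_C by auto

lemma sigma_bounds:
  assumes "t \<in> rankings" "al \<in> C"
  shows "0 \<le> sigma w t al" "sigma w t al \<le> 1"
  using w_bounds[OF pos_permutation_bounds[OF assms]] by (auto simp: sigma_def)

lemma sigma_antimono:
  assumes "t \<in> rankings" "t' \<in> rankings" "al \<in> C" "pos t al \<le> pos t' al"
  shows "sigma w t' al \<le> sigma w t al"
  unfolding sigma_def
  by (rule w_antimono) (use pos_permutation_bounds[OF assms(1,3)] pos_permutation_bounds[OF assms(2,3)] assms(4) in auto)

lemma sigma_move_to_front:
  assumes "t \<in> rankings" "b \<in> C" "al \<in> C" "al \<noteq> b"
  shows "sigma w (move_to_front b t) al \<le> sigma w t al"
  using assms permutations_of_setD[OF assms(1)]
  by (intro sigma_antimono move_to_front_permutation pos_move_to_front_other) auto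

lemma score_eq_sum_voters:
  assumes "\<forall>i<n. P i \<in> rankings"
  shows "score C w n P al = (\<Sum>i<n. sigma w (P i) al)"
proof -
  have "P ` {..<n} \<subseteq> rankings"
    using assms by auto
  from sum_by_fibre_card[OF _ this finite_rankings, of "\<lambda>t. sigma w t al"]
  show ?thesis
    unfolding score_def Ncount_def by simp
qed

lemma profiles_rankings: "P \<in> profiles C n \<Longrightarrow> i < n \<Longrightarrow> P i \<in> rankings"
  by (auto simp: profiles_def)

lemma T_first_subset: "T_first C b \<subseteq> rankings"
  by (auto simp: T_first_def)

lemma T_above_subset: "T_above C b a \<subseteq> rankings"
  by (auto simp: T_above_def)

lemma finite_T_first: "finite (T_first C b)"
  using finite_subset[OF T_first_subset finite_rankings] .

lemma finite_T_above: "finite (T_above C b a)"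
  using finite_subset[OF T_above_subset finite_rankings] .

lemma sigma_T_first: "t \<in> T_first C b \<Longrightarrow> sigma w t b = 1"
  using w_first by (auto simp: T_first_def sigma_def)

lemma T_first_subset_T_above:
  assumes "a \<in> C" "b \<in> C" "b \<noteq> a"
  shows "T_first C b \<subseteq> T_above C b a"
proof
  fix t
  assume t: "t \<in> T_first C b"
  then have "t \<in> rankings" "pos t b = 1"
    by (auto simp: T_first_def)
  moreover have "pos t a \<noteq> pos t b"
    using assms permutations_of_setD[OF \<open>t \<in> rankings\<close>]
    by (simp add: inj_on_eq_iff[OF inj_on_pos])
  ultimately show "t \<in> T_above C b a"
    using pos_permutation_bounds[OF _ assms(1), of t]
    by (auto simp: T_above_def ranks_above_def)
qed

lemma score_update:
  assumes P: "\<forall>i<n. P i \<in> rankings" and Q: "\<forall>i<n. Q i \<in> rankings"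
    and S: "S \<subseteq> {..<n}" and QP: "\<forall>i<n. i \<notin> S \<longrightarrow> Q i = P i"
  shows "score C w n Q al = score C w n P al - (\<Sum>i\<in>S. sigma w (P i) al) + (\<Sum>i\<in>S. sigma w (Q i) al)"
proof -
  have "score C w n Q al = (\<Sum>i\<in>{..<n} - S. sigma w (Q i) al) + (\<Sum>i\<in>S. sigma w (Q i) al)"
    using score_eq_sum_voters[OF Q] sum.subset_diff[OF S, of "\<lambda>i. sigma w (Q i) al"] by simp
  also have "(\<Sum>i\<in>{..<n} - S. sigma w (Q i) al) = (\<Sum>i\<in>{..<n} - S. sigma w (P i) al)"
    using QP by (intro sum.cong) auto
  also have "\<dots> = score C w n P al - (\<Sum>i\<in>S. sigma w (P i) al)"
    using score_eq_sum_voters[OF P] sum.subset_diff[OF S, of "\<lambda>i. sigma w (P i) al"] by simp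
  finally show ?thesis .
qed

definition lead_gain :: "'c \<Rightarrow> 'c \<Rightarrow> ('c list \<Rightarrow> real) \<Rightarrow> ('c list \<Rightarrow> real) \<Rightarrow> 'c \<Rightarrow> real" where
  "lead_gain b a x y al =
     (\<Sum>u\<in>T_first C b. y u * (1 - sigma w u al)) - (\<Sum>t\<in>T_above C b a. x t * (sigma w t b - sigma w t al))"

lemma lead_gain_cong:
  assumes "\<forall>t\<in>T_above C b a. x t = x' t" "\<forall>u\<in>T_first C b. y u = y' u"
  shows "lead_gain b a x y al = lead_gain b a x' y' al"
  unfolding lead_gain_def using assms by (metis (no_types, lifting) sum.cong)

lemma Q3_feasible_iff:
  "Q3_feasible C w n P a b x y \<longleftrightarrow>
     (\<forall>al\<in>C. al \<noteq> b \<longrightarrow> score C w n P al - score C w n P b \<le> lead_gain b a x y al) \<and>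
     sum y (T_first C b) = sum x (T_above C b a) \<and>
     (\<forall>t\<in>T_above C b a. 0 \<le> x t) \<and> (\<forall>u\<in>T_first C b. 0 \<le> y u)"
  by (simp add: Q3_feasible_def lead_gain_def)

lemma Q3_le_feasible: "Q3_feasible C w n P a b x y \<Longrightarrow> Q3 C w n P a b \<le> ereal (sum x (T_above C b a))"
  unfolding Q3_def by (rule Inf_lower) blast

lemma Q3_nonneg: "0 \<le> Q3 C w n P a b"
  unfolding Q3_def Q3_feasible_def by (rule Inf_greatest) (auto intro!: sum_nonneg)

lemma MCS_le_card: "manip_coalition C w n P a S \<Longrightarrow> MCS C w n P a \<le> ereal (real (card S))"
  unfolding MCS_def by (rule Inf_lower) blast

lemma lead_after_switch:
  assumes P: "\<forall>i<n. P i \<in> rankings" and Q: "\<forall>i<n. Q i \<in> rankings"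
    and S: "S \<subseteq> {..<n}" and QP: "\<forall>i<n. i \<notin> S \<longrightarrow> Q i = P i"
    and PS: "\<forall>i\<in>S. P i \<in> T_above C b a" and QS: "\<forall>i\<in>S. Q i \<in> T_first C b"
  shows "score C w n Q b - score C w n Q al =
    score C w n P b - score C w n P al +
    lead_gain b a (\<lambda>t. real (card {i\<in>S. P i = t})) (\<lambda>u. real (card {i\<in>S. Q i = u})) al"
proof -
  have finS: "finite S"
    using S finite_subset by blast
  have old: "(\<Sum>i\<in>S. sigma w (P i) c) = (\<Sum>t\<in>T_above C b a. real (card {i\<in>S. P i = t}) * sigma w t c)" for c
    using PS by (intro sum_by_fibre_card[OF finS _ finite_T_above]) auto
  have new: "(\<Sum>i\<in>S. sigma w (Q i) c) = (\<Sum>u\<in>T_first C b. real (card {i\<in>S. Q i = u}) * sigma w u c)" for c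
    using QS by (intro sum_by_fibre_card[OF finS _ finite_T_first]) auto
  have "(\<Sum>u\<in>T_first C b. real (card {i\<in>S. Q i = u}) * sigma w u b) = (\<Sum>u\<in>T_first C b. real (card {i\<in>S. Q i = u}))"
    by (simp add: sigma_T_first)
  then show ?thesis
    using score_update[OF P Q S QP, of b] score_update[OF P Q S QP, of al] old[of b] old[of al] new[of b] new[of al]
    by (simp add: lead_gain_def sum_subtractf right_diff_distrib)
qed

lemma manip_coalition_of_integral_solution:
  assumes P: "\<forall>i<n. P i \<in> rankings" and ab: "a \<in> C" "b \<in> C" "b \<noteq> a"
    and XN: "\<forall>t\<in>T_above C b a. X t \<le> Ncount n P t"
    and sumXY: "sum Y (T_first C b) = sum X (T_above C b a)"
    and lead: "\<forall>al\<in>C. al \<noteq> b \<longrightarrow>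
      score C w n P al - score C w n P b \<le> lead_gain b a (\<lambda>t. real (X t)) (\<lambda>u. real (Y u)) al"
  obtains S where "manip_coalition C w n P a S" "card S = sum X (T_above C b a)"
proof -
  obtain S where S: "S \<subseteq> {..<n}" "\<forall>i\<in>S. P i \<in> T_above C b a"
    "\<forall>t\<in>T_above C b a. card {i\<in>S. P i = t} = X t" and card_S: "card S = sum X (T_above C b a)"
    using ex_subset_with_fibre_cards[OF finite_T_above, where X = X and V = "{..<n}" and g = P] XN
    by (auto simp: Ncount_def)
  have finS: "finite S"
    using S(1) finite_subset by blast
  have "sum Y (T_first C b) = card S"
    using sumXY card_S by simp
  then obtain f where f: "\<forall>i\<in>S. f i \<in> T_first C b" "\<forall>u\<in>T_first C b. card {i\<in>S. f i = u} = Y u"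
    using ex_map_with_fibre_cards[OF finite_T_first finS] by blast
  define Q where "Q i = (if i \<in> S then f i else P i)" for i
  have Q: "\<forall>i<n. Q i \<in> rankings" "\<forall>i<n. i \<notin> S \<longrightarrow> Q i = P i" "\<forall>i\<in>S. Q i \<in> T_first C b"
    using P f T_first_subset[of b] S(1) by (auto simp: Q_def)
  have "{i\<in>S. Q i = u} = {i\<in>S. f i = u}" for u
    by (auto simp: Q_def)
  then have "lead_gain b a (\<lambda>t. real (card {i\<in>S. P i = t})) (\<lambda>u. real (card {i\<in>S. Q i = u})) al =
      lead_gain b a (\<lambda>t. real (X t)) (\<lambda>u. real (Y u)) al" for al
    using S(3) f(2) by (intro lead_gain_cong) auto
  then have lead_Q: "score C w n Q b - score C w n Q al =
      score C w n P b - score C w n P al + lead_gain b a (\<lambda>t. real (X t)) (\<lambda>u. real (Y u)) al" for al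
    using lead_after_switch[OF P Q(1) S(1) Q(2) S(2) Q(3), of al] by simp
  have "score C w n Q al \<le> score C w n Q b" if "al \<in> C" for al
  proof (cases "al = b")
    case False
    then have "score C w n P al - score C w n P b \<le> lead_gain b a (\<lambda>t. real (X t)) (\<lambda>u. real (Y u)) al"
      using lead that by blast
    with lead_Q[of al] show ?thesis
      by linarith
  qed simp
  moreover have "\<forall>i\<in>S. ranks_above (P i) b a"
    using S(2) by (simp add: T_above_def)
  ultimately have "manip_coalition C w n P a S"
    unfolding manip_coalition_def using S(1) ab(2,3) Q(1,2) by blast
  then show ?thesis
    using that card_S by blast
qed

lemma move_to_front_keeps_winner:
  assumes Q: "\<forall>i<n. Q i \<in> rankings" and S: "S \<subseteq> {..<n}" and b: "b \<in> C"
    and win: "\<forall>al\<in>C. score C w n Q al \<le> score C w n Q b"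
  defines "Q' \<equiv> \<lambda>i. if i \<in> S then move_to_front b (Q i) else Q i"
  shows "\<forall>al\<in>C. score C w n Q' al \<le> score C w n Q' b"
proof -
  have Q': "\<forall>i<n. Q' i \<in> rankings" "\<forall>i<n. i \<notin> S \<longrightarrow> Q' i = Q i"
    using Q b by (auto simp: Q'_def move_to_front_permutation)
  have "Q' i \<in> T_first C b" if "i \<in> S" for i
    using move_to_front_permutation[OF _ b, of "Q i"] Q S that
    by (auto simp: Q'_def T_first_def pos_move_to_front_self)
  then have "(\<Sum>i\<in>S. sigma w (Q i) b) \<le> (\<Sum>i\<in>S. sigma w (Q' i) b)"
    using sigma_bounds(2) sigma_T_first Q S b by (intro sum_mono) auto
  then have "score C w n Q b \<le> score C w n Q' b"
    using score_update[OF Q Q'(1) S Q'(2), of b] by simp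
  moreover have "score C w n Q' al \<le> score C w n Q al" if "al \<in> C" "al \<noteq> b" for al
  proof -
    have "(\<Sum>i\<in>S. sigma w (Q' i) al) \<le> (\<Sum>i\<in>S. sigma w (Q i) al)"
      using sigma_move_to_front Q S b that by (intro sum_mono) (auto simp: Q'_def)
    then show ?thesis
      using score_update[OF Q Q'(1) S Q'(2), of al] by simp
  qed
  ultimately show ?thesis
    using win by fastforce
qed

lemma Q3_le_card_coalition:
  assumes P: "\<forall>i<n. P i \<in> rankings" and ab: "a \<in> C" "b \<in> C" "b \<noteq> a"
    and S: "S \<subseteq> {..<n}" "\<forall>i\<in>S. ranks_above (P i) b a"
    and Q: "\<forall>i<n. Q i \<in> rankings" "\<forall>i<n. i \<notin> S \<longrightarrow> Q i = P i"
    and win: "\<forall>al\<in>C. score C w n Q al \<le> score C w n Q b"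
  shows "Q3 C w n P a b \<le> ereal (real (card S))"
proof -
  define Q' where "Q' i = (if i \<in> S then move_to_front b (Q i) else Q i)" for i
  have Q': "\<forall>i<n. Q' i \<in> rankings" "\<forall>i<n. i \<notin> S \<longrightarrow> Q' i = P i" "\<forall>i\<in>S. Q' i \<in> T_first C b"
    using Q S(1) ab(2) by (auto simp: Q'_def T_first_def move_to_front_permutation pos_move_to_front_self)
  have win': "\<forall>al\<in>C. score C w n Q' al \<le> score C w n Q' b"
    using move_to_front_keeps_winner[OF Q(1) S(1) ab(2) win] by (simp add: Q'_def[abs_def])
  have finS: "finite S"
    using S(1) finite_subset by blast
  define x where "x = (\<lambda>t. real (card {i\<in>S. P i = t}))"
  define y where "y = (\<lambda>u. real (card {i\<in>S. Q' i = u}))"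
  have PS: "\<forall>i\<in>S. P i \<in> T_above C b a"
    using S P by (auto simp: T_above_def)
  then have "P ` S \<subseteq> T_above C b a"
    by auto
  then have "sum x (T_above C b a) = real (card S)"
    using sum_by_fibre_card[OF finS _ finite_T_above, where h = "\<lambda>_. 1::real"] by (simp add: x_def)
  moreover have "Q' ` S \<subseteq> T_first C b"
    using Q'(3) by auto
  then have "sum y (T_first C b) = real (card S)"
    using sum_by_fibre_card[OF finS _ finite_T_first, where h = "\<lambda>_. 1::real"] by (simp add: y_def)
  moreover have "score C w n P al - score C w n P b \<le> lead_gain b a x y al" if "al \<in> C" for al
    using lead_after_switch[OF P Q'(1) S(1) Q'(2) PS Q'(3), where al = al] win' that
    unfolding x_def y_def by fastforce
  ultimately have "Q3_feasible C w n P a b x y"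
    unfolding Q3_feasible_iff by (simp add: x_def y_def)
  then show ?thesis
    using Q3_le_feasible \<open>sum x (T_above C b a) = real (card S)\<close> by metis
qed

lemma Min_Q3_le_MCS:
  assumes P: "\<forall>i<n. P i \<in> rankings" and a: "a \<in> C"
  shows "Min (Q3 C w n P a ` (C - {a})) \<le> MCS C w n P a"
  unfolding MCS_def
proof (rule Inf_greatest)
  fix z
  assume "z \<in> {ereal (real (card S)) |S. manip_coalition C w n P a S}"
  then obtain S b Q where z: "z = ereal (real (card S))"
    and b: "b \<in> C" "b \<noteq> a" "\<forall>i\<in>S. ranks_above (P i) b a" "S \<subseteq> {..<n}"
    and Q: "\<forall>i<n. Q i \<in> rankings" "\<forall>i<n. i \<notin> S \<longrightarrow> Q i = P i"
      "\<forall>al\<in>C. score C w n Q al \<le> score C w n Q b"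
    unfolding manip_coalition_def by blast
  have "Min (Q3 C w n P a ` (C - {a})) \<le> Q3 C w n P a b"
    using b finite_C by (intro Min_le) auto
  also have "\<dots> \<le> z"
    using Q3_le_card_coalition[OF P a b(1,2) b(4,3) Q] z by simp
  finally show "Min (Q3 C w n P a ` (C - {a})) \<le> z" .
qed

lemma card_T_above_less: 
  assumes "a \<in> C" "b \<in> C"
  shows "card (T_above C b a) < card rankings"
proof -
  obtain ys where ys: "[a] @ ys \<in> rankings"
    using ex_permutation_with_prefix[OF finite_C, of "[a]"] assms by auto
  moreover have "[a] @ ys \<notin> T_above C b a"
    using pos_permutation_bounds[OF ys assms(2)] by (simp add: T_above_def ranks_above_def pos_Cons_self)
  ultimately have "T_above C b a \<subset> rankings"
    using T_above_subset by blast
  then show ?thesis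
    by (simp add: psubset_card_mono)
qed

lemma lead_gain_add_switch:
  assumes "t0 \<in> T_above C b a" "u0 \<in> T_first C b"
  shows "lead_gain b a (\<lambda>t. x t + (if t = t0 then s else 0)) (\<lambda>u. y u + (if u = u0 then s else 0)) al =
    lead_gain b a x y al + s * ((1 - sigma w u0 al) - (sigma w t0 b - sigma w t0 al))"
  unfolding lead_gain_def sum_add_delta_mult[OF finite_T_first assms(2)] sum_add_delta_mult[OF finite_T_above assms(1)]
  by (simp add: algebra_simps)

text \<open>A voter ranking \<open>b\<close> second to last and \<open>a\<close> last who moves \<open>b\<close> to the top
  gains \<open>b\<close> at least \<open>1 - w_penult\<close> on every other candidate.\<close>
lemma switch_witness:
  assumes ab: "a \<in> C" "b \<in> C" "b \<noteq> a"
  obtains t0 u0 where "t0 \<in> T_above C b a" "u0 \<in> T_first C b"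
    "\<And>x y s al. 0 \<le> s \<Longrightarrow> al \<in> C \<Longrightarrow> al \<noteq> b \<Longrightarrow> lead_gain b a x y al + s * (1 - w_penult)
       \<le> lead_gain b a (\<lambda>t. x t + (if t = t0 then s else 0)) (\<lambda>u. y u + (if u = u0 then s else 0)) al"
proof -
  obtain ys where ys: "ys @ [b, a] \<in> rankings"
    using ex_permutation_with_suffix[OF finite_C, of "[b, a]"] ab by auto
  define t0 where "t0 = ys @ [b, a]"
  have t0: "t0 \<in> rankings" "distinct t0" "length t0 = card C"
    using ys permutations_of_setD(2)[OF ys] length_finite_permutations_of_set[OF ys]
    unfolding t0_def by blast+
  have pos_b: "pos t0 b = card C - 1" and pos_a: "pos t0 a = card C"
    using pos_eqI[OF t0(2), of "length ys" b] pos_eqI[OF t0(2), of "Suc (length ys)" a] t0(3)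
    by (auto simp: t0_def nth_append)
  have TA: "t0 \<in> T_above C b a"
    using t0(1) pos_a pos_b card_C by (simp add: T_above_def ranks_above_def)
  have TF: "move_to_front b t0 \<in> T_first C b"
    using move_to_front_permutation[OF t0(1) ab(2)] by (simp add: T_first_def pos_move_to_front_self)
  have "1 - w_penult \<le> (1 - sigma w (move_to_front b t0) al) - (sigma w t0 b - sigma w t0 al)"
    if "al \<in> C" "al \<noteq> b" for al
    using sigma_move_to_front[OF t0(1) ab(2) that] pos_b by (simp add: sigma_def)
  then show ?thesis
    using that[OF TA TF] lead_gain_add_switch[OF TA TF] by (simp add: mult_left_mono)
qed

lemma Q3_le_gap:
  assumes ab: "a \<in> C" "b \<in> C" "b \<noteq> a" and wp: "w_penult < 1" and \<Delta>: "0 \<le> \<Delta>"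
    and gap: "\<forall>al\<in>C. score C w n P al - score C w n P b \<le> \<Delta>"
  shows "Q3 C w n P a b \<le> ereal (\<Delta> / (1 - w_penult))"
proof -
  obtain t0 u0 where t0: "t0 \<in> T_above C b a" and u0: "u0 \<in> T_first C b"
    and gain: "\<And>x y s al. 0 \<le> s \<Longrightarrow> al \<in> C \<Longrightarrow> al \<noteq> b \<Longrightarrow> lead_gain b a x y al + s * (1 - w_penult)
       \<le> lead_gain b a (\<lambda>t. x t + (if t = t0 then s else 0)) (\<lambda>u. y u + (if u = u0 then s else 0)) al"
    using switch_witness[OF ab] by blast
  define s where "s = \<Delta> / (1 - w_penult)"
  have s: "0 \<le> s" "s * (1 - w_penult) = \<Delta>"
    using \<Delta> wp by (auto simp: s_def)
  define x where "x t = 0 + (if t = t0 then s else 0)" for t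
  define y where "y u = 0 + (if u = u0 then s else 0)" for u
  have "lead_gain b a (\<lambda>_. 0) (\<lambda>_. 0) al = 0" for al
    by (simp add: lead_gain_def)
  then have "score C w n P al - score C w n P b \<le> lead_gain b a x y al" if "al \<in> C" "al \<noteq> b" for al
    using gap that gain[OF s(1) that, of "\<lambda>_. 0" "\<lambda>_. 0"] s(2) unfolding x_def y_def by fastforce
  moreover have "sum x (T_above C b a) = s" "sum y (T_first C b) = s"
    using t0 u0 finite_T_above finite_T_first by (simp_all add: x_def y_def)
  ultimately have "Q3_feasible C w n P a b x y"
    using s(1) by (auto simp: Q3_feasible_iff x_def y_def)
  then show ?thesis
    using Q3_le_feasible \<open>sum x (T_above C b a) = s\<close> s_def by metis
qed

lemma lead_gain_perturb:
  assumes al: "al \<in> C" and b: "b \<in> C" and X: "\<forall>t\<in>T_above C b a. \<bar>X t - x t\<bar> \<le> 1"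
  shows "lead_gain b a x y al - (\<Sum>u\<in>T_first C b. max 0 (y u - Y u)) - real (card (T_above C b a))
    \<le> lead_gain b a X Y al"
proof -
  have "\<forall>u\<in>T_first C b. 0 \<le> 1 - sigma w u al \<and> 1 - sigma w u al \<le> 1"
  proof
    fix u
    assume "u \<in> T_first C b"
    then show "0 \<le> 1 - sigma w u al \<and> 1 - sigma w u al \<le> 1"
      using sigma_bounds[OF _ al, of u] T_first_subset by auto
  qed
  then have "(\<Sum>u\<in>T_first C b. y u * (1 - sigma w u al)) - (\<Sum>u\<in>T_first C b. Y u * (1 - sigma w u al))
      \<le> (\<Sum>u\<in>T_first C b. max 0 (y u - Y u))"
    by (rule sum_mult_diff_le_pos_part)
  moreover have "\<forall>t\<in>T_above C b a. \<bar>sigma w t b - sigma w t al\<bar> \<le> 1"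
  proof
    fix t
    assume "t \<in> T_above C b a"
    then have "t \<in> rankings"
      using T_above_subset by auto
    then show "\<bar>sigma w t b - sigma w t al\<bar> \<le> 1"
      using sigma_bounds[OF _ al, of t] sigma_bounds[OF _ b, of t] by (simp add: abs_le_iff)
  qed
  then have "(\<Sum>t\<in>T_above C b a. X t * (sigma w t b - sigma w t al)) \<le>
      (\<Sum>t\<in>T_above C b a. x t * (sigma w t b - sigma w t al)) + real (card (T_above C b a))"
    using X by (intro sum_mult_perturb_le)
  ultimately show ?thesis
    unfolding lead_gain_def by linarith
qed

lemma ex_integral_approximation:
  assumes ab: "a \<in> C" "b \<in> C" "b \<noteq> a" and feas: "Q3_feasible C w n P a b x y"
  obtains X Y :: "'c list \<Rightarrow> nat" where "sum Y (T_first C b) = sum X (T_above C b a)"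
    "\<forall>t\<in>T_above C b a. real (X t) \<le> x t"
    "\<forall>al\<in>C. lead_gain b a x y al - 2 * real (card (T_above C b a))
       \<le> lead_gain b a (\<lambda>t. real (X t)) (\<lambda>u. real (Y u)) al"
proof -
  define TA where "TA = T_above C b a"
  define TF where "TF = T_first C b"
  have x: "\<forall>t\<in>TA. 0 \<le> x t" and y: "\<forall>u\<in>TF. 0 \<le> y u" and sum_xy: "sum y TF = sum x TA"
    using feas by (auto simp: Q3_feasible_def TA_def TF_def)
  define X where "X t = nat \<lfloor>x t\<rfloor>" for t
  have X: "real (X t) \<le> x t" "x t - real (X t) \<le> 1" if "t \<in> TA" for t
    using x that by (auto simp: X_def) linarith+
  have "sum y TF - real (sum X TA) = (\<Sum>t\<in>TA. x t - real (X t))"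
    using sum_xy by (simp add: sum_subtractf)
  also have "\<dots> \<le> real (card TA)"
    using sum_mono[of TA "\<lambda>t. x t - real (X t)" "\<lambda>_. 1"] X(2) by simp
  finally have X_sum: "sum y TF - real (sum X TA) \<le> real (card TA)" .
  have TF: "finite TF" "TF \<noteq> {}" "real (card TF) \<le> real (card TA)"
    using switch_witness[OF ab] T_first_subset_T_above[OF ab(1-3)] finite_T_above finite_T_first
    by (auto simp: TA_def TF_def intro: card_mono)
  obtain Y where Y: "sum Y TF = sum X TA" "(\<Sum>u\<in>TF. max 0 (y u - real (Y u))) \<le> real (card TA)"
    using ex_rounding_with_sum[OF TF(1,2) y X_sum TF(3)] by blast
  have "\<forall>t\<in>TA. \<bar>real (X t) - x t\<bar> \<le> 1"
    using X by (simp add: abs_le_iff)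
  then have "lead_gain b a x y al - 2 * real (card TA) \<le> lead_gain b a (\<lambda>t. real (X t)) (\<lambda>u. real (Y u)) al"
    if "al \<in> C" for al
    using lead_gain_perturb[OF that ab(2), of a "\<lambda>t. real (X t)" x y "\<lambda>u. real (Y u)"] Y(2)
    unfolding TA_def TF_def by linarith
  then show ?thesis
    using Y(1) X(1) unfolding TA_def TF_def by (intro that) auto
qed

lemma Kconst_eq: "w_penult < 1 \<Longrightarrow> Kconst (card C) w = 2 * card rankings / (1 - w_penult)"
  using finite_C by (simp add: Kconst_def)

lemma ex_padding_size:
  assumes ab: "a \<in> C" "b \<in> C" and wp: "w_penult < 1"
  obtains k :: nat where "2 * real (card (T_above C b a)) \<le> real k * (1 - w_penult)"
    "real k \<le> Kconst (card C) w - 1"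
proof -
  define k where "k = nat \<lceil>2 * real (card (T_above C b a)) / (1 - w_penult)\<rceil>"
  have "2 * real (card (T_above C b a)) / (1 - w_penult) \<le> real k"
    unfolding k_def by linarith
  then have k_ge: "2 * real (card (T_above C b a)) \<le> real k * (1 - w_penult)"
    using wp by (simp add: field_simps)
  have "real (card (T_above C b a)) \<le> real (card rankings) - 1"
    using card_T_above_less[OF ab] by linarith
  then have "2 * real (card (T_above C b a)) / (1 - w_penult) \<le> (2 * real (card rankings) - 2) / (1 - w_penult)"
    using wp by (intro divide_right_mono) auto
  also have "\<dots> = Kconst (card C) w - 2 / (1 - w_penult)"
    using wp by (simp add: Kconst_eq diff_divide_distrib)
  also have "\<dots> \<le> Kconst (card C) w - 2"
    using wp w_penult_bounds(1) by (simp add: le_divide_eq)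
  moreover have "real k \<le> 2 * real (card (T_above C b a)) / (1 - w_penult) + 1"
    unfolding k_def using wp by (simp add: of_nat_nat)
  ultimately have "real k \<le> Kconst (card C) w - 1"
    by linarith
  with k_ge show ?thesis
    by (rule that)
qed

lemma ex_integral_solution_near:
  assumes ab: "a \<in> C" "b \<in> C" "b \<noteq> a" and wp: "w_penult < 1"
    and feas: "Q3_feasible C w n P a b x y"
  obtains X Y :: "'c list \<Rightarrow> nat" where "sum Y (T_first C b) = sum X (T_above C b a)"
    "real (sum X (T_above C b a)) \<le> sum x (T_above C b a) + Kconst (card C) w - 1"
    "\<forall>t\<in>T_above C b a. real (X t) \<le> x t + Kconst (card C) w - 1"
    "\<forall>al\<in>C. al \<noteq> b \<longrightarrow> score C w n P al - score C w n P b \<le> lead_gain b a (\<lambda>t. real (X t)) (\<lambda>u. real (Y u)) al"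
proof -
  obtain X0 Y0 where XY0: "sum Y0 (T_first C b) = sum X0 (T_above C b a)"
    "\<forall>t\<in>T_above C b a. real (X0 t) \<le> x t"
    "\<forall>al\<in>C. lead_gain b a x y al - 2 * real (card (T_above C b a))
       \<le> lead_gain b a (\<lambda>t. real (X0 t)) (\<lambda>u. real (Y0 u)) al"
    by (rule ex_integral_approximation[OF ab feas])
  obtain t0 u0 where t0: "t0 \<in> T_above C b a" and u0: "u0 \<in> T_first C b"
    and gain: "\<And>x y s al. 0 \<le> s \<Longrightarrow> al \<in> C \<Longrightarrow> al \<noteq> b \<Longrightarrow> lead_gain b a x y al + s * (1 - w_penult)
       \<le> lead_gain b a (\<lambda>t. x t + (if t = t0 then s else 0)) (\<lambda>u. y u + (if u = u0 then s else 0)) al"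
    using switch_witness[OF ab] by blast
  \<comment> \<open>\<open>k\<close> extra switches from \<open>t0\<close> to \<open>u0\<close> make up for the rounding errors\<close>
  obtain k where k: "2 * real (card (T_above C b a)) \<le> real k * (1 - w_penult)" "real k \<le> Kconst (card C) w - 1"
    using ex_padding_size[OF ab(1,2) wp] .
  define X where "X t = X0 t + (if t = t0 then k else 0)" for t
  define Y where "Y u = Y0 u + (if u = u0 then k else 0)" for u
  have "sum Y (T_first C b) = sum X (T_above C b a)" "sum X (T_above C b a) = sum X0 (T_above C b a) + k"
    using t0 u0 XY0(1) finite_T_first finite_T_above by (simp_all add: X_def Y_def sum.distrib)
  moreover have "real (sum X0 (T_above C b a)) \<le> sum x (T_above C b a)"
    using XY0(2) sum_mono[of "T_above C b a" "\<lambda>t. real (X0 t)" x] by (simp add: of_nat_sum)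
  moreover have "\<forall>t\<in>(T_above C b a). real (X t) \<le> x t + Kconst (card C) w - 1"
    using XY0(2) k(2) by (auto simp: X_def)
  moreover have "score C w n P al - score C w n P b \<le> lead_gain b a (\<lambda>t. real (X t)) (\<lambda>u. real (Y u)) al"
    if al: "al \<in> C" "al \<noteq> b" for al
  proof -
    have "(\<lambda>t. real (X t)) = (\<lambda>t. real (X0 t) + (if t = t0 then real k else 0))"
      "(\<lambda>u. real (Y u)) = (\<lambda>u. real (Y0 u) + (if u = u0 then real k else 0))"
      by (auto simp: X_def Y_def)
    moreover have "score C w n P al - score C w n P b \<le> lead_gain b a x y al"
      using feas al by (simp add: Q3_feasible_iff)
    ultimately show ?thesis
      using gain[OF _ al, of "real k" "\<lambda>t. real (X0 t)" "\<lambda>u. real (Y0 u)"] XY0(3) al(1) k(1) by fastforce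
  qed
  ultimately show ?thesis
    using that[of Y X] k(2) by auto
qed

lemma MCS_close_nonveto:
  assumes P: "\<forall>i<n. P i \<in> rankings" and ab: "a \<in> C" "b \<in> C" "b \<noteq> a" and wp: "w_penult < 1"
    and \<Delta>: "0 \<le> \<Delta>" and gap: "\<forall>al\<in>C. score C w n P al - score C w n P b \<le> \<Delta>"
    and counts: "\<forall>t\<in>rankings. \<Delta> / (1 - w_penult) + Kconst (card C) w \<le> real (Ncount n P t)"
    and lower: "Q3 C w n P a b \<le> MCS C w n P a"
  shows "ereal_close (Kconst (card C) w) (MCS C w n P a) (Q3 C w n P a b)"
proof -
  obtain q where q: "Q3 C w n P a b = ereal q" "q \<le> \<Delta> / (1 - w_penult)"
    using Q3_le_gap[OF ab wp \<Delta> gap] Q3_nonneg by (cases "Q3 C w n P a b") auto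
  then have "Q3 C w n P a b < ereal (q + 1 / 2)"
    by simp
  then obtain x y where feas: "Q3_feasible C w n P a b x y" and x: "sum x (T_above C b a) < q + 1 / 2"
    unfolding Q3_def Inf_less_iff by auto
  obtain X Y where XY: "sum Y (T_first C b) = sum X (T_above C b a)"
    "real (sum X (T_above C b a)) \<le> sum x (T_above C b a) + Kconst (card C) w - 1"
    "\<forall>t\<in>T_above C b a. real (X t) \<le> x t + Kconst (card C) w - 1"
    "\<forall>al\<in>C. al \<noteq> b \<longrightarrow> score C w n P al - score C w n P b \<le> lead_gain b a (\<lambda>t. real (X t)) (\<lambda>u. real (Y u)) al"
    by (rule ex_integral_solution_near[OF ab wp feas])
  have "X t \<le> Ncount n P t" if t: "t \<in> T_above C b a" for t
  proof -
    have "x t \<le> sum x (T_above C b a)"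
      using feas t finite_T_above by (intro member_le_sum) (auto simp: Q3_feasible_def)
    then have "real (X t) \<le> \<Delta> / (1 - w_penult) + Kconst (card C) w"
      using XY(3) t x q(2) by fastforce
    then show ?thesis
      using counts t T_above_subset by fastforce
  qed
  then obtain S where S: "manip_coalition C w n P a S" "card S = sum X (T_above C b a)"
    using manip_coalition_of_integral_solution[OF P ab _ XY(1,4)] by blast
  have "MCS C w n P a \<le> ereal (q + Kconst (card C) w)"
    using MCS_le_card[OF S(1)] S(2) XY(2) x by (simp add: order_trans)
  then obtain r where "MCS C w n P a = ereal r" "q \<le> r" "r \<le> q + Kconst (card C) w"
    using lower q(1) by (cases "MCS C w n P a") auto
  then show ?thesis
    using q(1) by (simp add: ereal_close_def)
qed

lemma last_ranking: "t \<in> rankings \<Longrightarrow> last t \<in> C"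
  using card_C length_finite_permutations_of_set[of t C] permutations_of_setD(1)[of t C]
  by (metis last_in_set list.size(3) not_numeral_le_zero)

lemma sigma_veto:
  assumes wp: "w_penult = 1" and t: "t \<in> rankings" and al: "al \<in> C"
  shows "sigma w t al = (if al = last t then 0 else 1)"
proof -
  have pos: "1 \<le> pos t al" "pos t al \<le> card C"
    using pos_permutation_bounds[OF t al] by auto
  have "pos t al = card C \<longleftrightarrow> al = last t"
    using pos_eq_length_iff[of t al] permutations_of_setD[OF t] length_finite_permutations_of_set[OF t] al
    by simp
  moreover have "w (pos t al) = 1" if "pos t al \<noteq> card C"
  proof -
    have "w_penult \<le> w (pos t al)"
      using pos that by (intro w_antimono) auto
    then show ?thesis
      using w_bounds[OF pos] wp by simp
  qed
  ultimately show ?thesis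
    using w_last by (auto simp: sigma_def)
qed

lemma last_T_above: "t \<in> T_above C b a \<Longrightarrow> a \<in> C \<Longrightarrow> last t \<in> C - {b}"
  using pos_permutation_bounds[of t C a] pos_eq_length_iff[of t b] last_ranking[of t]
    length_finite_permutations_of_set[of t C] permutations_of_setD[of t C]
  by (auto simp: T_above_def ranks_above_def)

lemma last_T_first: "t \<in> T_first C b \<Longrightarrow> last t \<in> C - {b}"
  using card_C pos_eq_length_iff[of t b] last_ranking[of t]
    length_finite_permutations_of_set[of t C] permutations_of_setD[of t C]
  by (auto simp: T_first_def)

lemma lead_gain_veto:
  assumes wp: "w_penult = 1" and ab: "a \<in> C" "b \<in> C" and al: "al \<in> C"
  shows "lead_gain b a x y al =
    sum y {u\<in>T_first C b. last u = al} - sum x {t\<in>T_above C b a. last t = al}"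
proof -
  have "(\<Sum>u\<in>T_first C b. y u * (1 - sigma w u al)) = (\<Sum>u\<in>T_first C b. if last u = al then y u else 0)"
  proof (intro sum.cong refl)
    fix u
    assume "u \<in> T_first C b"
    then have "u \<in> rankings"
      using T_first_subset by blast
    then show "y u * (1 - sigma w u al) = (if last u = al then y u else 0)"
      by (cases "last u = al") (simp_all add: sigma_veto[OF wp _ al])
  qed
  moreover have "(\<Sum>t\<in>T_above C b a. x t * (sigma w t b - sigma w t al)) =
      (\<Sum>t\<in>T_above C b a. if last t = al then x t else 0)"
  proof (intro sum.cong refl)
    fix t
    assume t: "t \<in> T_above C b a"
    then have "t \<in> rankings" "last t \<noteq> b"
      using T_above_subset last_T_above[OF t ab(1)] by auto
    then show "x t * (sigma w t b - sigma w t al) = (if last t = al then x t else 0)"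
      by (cases "last t = al") (simp_all add: sigma_veto[OF wp _ al] sigma_veto[OF wp _ ab(2)])
  qed
  ultimately show ?thesis
    by (simp add: lead_gain_def sum.inter_filter finite_T_first finite_T_above)
qed

lemma sum_T_above_by_last:
  assumes "a \<in> C"
  shows "sum x (T_above C b a) = (\<Sum>al\<in>C - {b}. sum x {t\<in>T_above C b a. last t = al})"
proof -
  have "last ` T_above C b a \<subseteq> C - {b}"
    using last_T_above assms by blast
  from sum.group[OF finite_T_above[of b a] _ this, where h = x] finite_C show ?thesis
    by simp
qed

lemma sum_T_first_by_last: "sum y (T_first C b) = (\<Sum>al\<in>C - {b}. sum y {u\<in>T_first C b. last u = al})"
proof -
  have "last ` T_first C b \<subseteq> C - {b}"
    using last_T_first by blast
  from sum.group[OF finite_T_first[of b] _ this, where h = y] finite_C show ?thesis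
    by simp
qed

lemma veto_feasible_bounds:
  assumes wp: "w_penult = 1" and ab: "a \<in> C" "b \<in> C" and feas: "Q3_feasible C w n P a b x y"
  shows "(\<Sum>al\<in>C - {b}. score C w n P al - score C w n P b) \<le> 0"
    "(\<Sum>al\<in>C - {b}. max 0 (score C w n P al - score C w n P b)) \<le> sum x (T_above C b a)"
proof -
  define Xa where "Xa al = sum x {t\<in>T_above C b a. last t = al}" for al
  define Ya where "Ya al = sum y {u\<in>T_first C b. last u = al}" for al
  have gap: "score C w n P al - score C w n P b \<le> Ya al - Xa al" if "al \<in> C - {b}" for al
    using feas that lead_gain_veto[OF wp ab] by (auto simp: Q3_feasible_iff Xa_def Ya_def)
  have "sum y (T_first C b) = sum x (T_above C b a)"
    using feas by (simp add: Q3_feasible_def)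
  then have sums: "sum Xa (C - {b}) = sum x (T_above C b a)" "sum Ya (C - {b}) = sum x (T_above C b a)"
    unfolding Xa_def Ya_def sum_T_above_by_last[OF ab(1), symmetric] sum_T_first_by_last[symmetric] by simp_all
  have "(\<Sum>al\<in>C - {b}. score C w n P al - score C w n P b) \<le> (\<Sum>al\<in>C - {b}. Ya al - Xa al)"
    by (rule sum_mono) (rule gap)
  then show "(\<Sum>al\<in>C - {b}. score C w n P al - score C w n P b) \<le> 0"
    using sums by (simp add: sum_subtractf)
  have "\<forall>al\<in>C - {b}. 0 \<le> Xa al" "\<forall>al\<in>C - {b}. 0 \<le> Ya al"
    using feas by (auto simp: Xa_def Ya_def Q3_feasible_def intro!: sum_nonneg)
  have "(\<Sum>al\<in>C - {b}. max 0 (score C w n P al - score C w n P b)) \<le> (\<Sum>al\<in>C - {b}. max 0 (Ya al - Xa al))"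
    using gap by (intro sum_mono max.mono) auto
  also have "\<dots> \<le> sum Xa (C - {b})"
    using sum_max_0_diff_le[OF \<open>\<forall>al\<in>C - {b}. 0 \<le> Xa al\<close> \<open>\<forall>al\<in>C - {b}. 0 \<le> Ya al\<close>] sums by simp
  finally show "(\<Sum>al\<in>C - {b}. max 0 (score C w n P al - score C w n P b)) \<le> sum x (T_above C b a)"
    using sums by simp
qed

lemma ex_T_first_last:
  assumes "b \<in> C"
  obtains us where "\<forall>al\<in>C - {b}. us al \<in> T_first C b \<and> last (us al) = al"
proof -
  have "\<forall>al\<in>C - {b}. \<exists>u. u \<in> T_first C b \<and> last u = al"
  proof
    fix al
    assume al: "al \<in> C - {b}"
    obtain ys where "distinct ys" "set ys = C - {b, al}"
      using finite_distinct_list[of "C - {b, al}"] finite_C by auto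
    then have "b # ys @ [al] \<in> rankings"
      using assms al by (auto simp: permutations_of_set_def)
    then show "\<exists>u. u \<in> T_first C b \<and> last u = al"
      by (intro exI[of _ "b # ys @ [al]"]) (simp add: T_first_def pos_Cons_self)
  qed
  then have "\<exists>us. \<forall>al\<in>C - {b}. us al \<in> T_first C b \<and> last (us al) = al"
    by (rule bchoice)
  then show ?thesis
    using that by blast
qed

lemma score_Ints:
  assumes "w_penult = 1" "\<forall>i<n. P i \<in> rankings" "al \<in> C"
  shows "score C w n P al \<in> \<int>"
  unfolding score_eq_sum_voters[OF assms(2)] by (rule Ints_sum) (use sigma_veto assms in auto)

lemma manip_coalition_of_last_counts:
  assumes P: "\<forall>i<n. P i \<in> rankings" and ab: "a \<in> C" "b \<in> C" "b \<noteq> a" and wp: "w_penult = 1"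
    and de: "sum d (C - {b}) = sum e (C - {b})"
    and lead: "\<forall>al\<in>C - {b}. score C w n P al - score C w n P b \<le> real (e al) - real (d al)"
    and counts: "\<forall>al\<in>C - {b}. \<forall>t\<in>rankings. d al \<le> Ncount n P t"
  obtains S where "manip_coalition C w n P a S" "card S = sum e (C - {b})"
proof -
  define A where "A = C - {b}"
  obtain us where us: "\<forall>al\<in>A. us al \<in> T_first C b \<and> last (us al) = al"
    using ex_T_first_last[OF ab(2)] unfolding A_def by blast
  then have ts: "\<forall>al\<in>A. us al \<in> T_above C b a \<and> last (us al) = al"
    using T_first_subset_T_above[OF ab] by (simp add: subset_iff)
  define X where "X t = (if t \<in> us ` A then d (last t) else 0)" for t
  define Y where "Y u = (if u \<in> us ` A then e (last u) else 0)" for u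
  have fibres: "sum X {t\<in>T_above C b a. last t = al} = d al" "sum Y {u\<in>T_first C b. last u = al} = e al"
    if "al \<in> A" for al
    unfolding X_def Y_def
    by (rule sum_fibre_of_section[OF finite_T_above ts that], rule sum_fibre_of_section[OF finite_T_first us that])
  have "sum X (T_above C b a) = sum d A" "sum Y (T_first C b) = sum e A"
    unfolding sum_T_above_by_last[OF ab(1)] sum_T_first_by_last A_def[symmetric]
    using fibres by (auto intro: sum.cong)
  then have sums: "sum X (T_above C b a) = sum e A" "sum Y (T_first C b) = sum e A"
    using de by (simp_all add: A_def)
  have "\<forall>al\<in>C. al \<noteq> b \<longrightarrow>
      score C w n P al - score C w n P b \<le> lead_gain b a (\<lambda>t. real (X t)) (\<lambda>u. real (Y u)) al"
    using lead fibres lead_gain_veto[OF wp ab(1,2)] by (simp add: A_def flip: of_nat_sum)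
  moreover have "\<forall>t\<in>T_above C b a. X t \<le> Ncount n P t"
  proof
    fix t
    assume t: "t \<in> T_above C b a"
    then have "last t \<in> C - {b}" "t \<in> rankings"
      using last_T_above[OF t ab(1)] T_above_subset by auto
    then show "X t \<le> Ncount n P t"
      using counts by (simp add: X_def)
  qed
  ultimately obtain S where "manip_coalition C w n P a S" "card S = sum X (T_above C b a)"
    using manip_coalition_of_integral_solution[OF P ab] sums by (metis (no_types, lifting))
  then show ?thesis
    using that sums by (simp add: A_def)
qed

lemma ex_coalition_veto:
  assumes P: "\<forall>i<n. P i \<in> rankings" and ab: "a \<in> C" "b \<in> C" "b \<noteq> a" and wp: "w_penult = 1"
    and sum_le: "(\<Sum>al\<in>C - {b}. score C w n P al - score C w n P b) \<le> 0"
    and gap: "\<forall>al\<in>C. score C w n P b - score C w n P al \<le> \<Delta>"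
    and counts: "\<forall>t\<in>rankings. \<Delta> \<le> real (Ncount n P t)"
  obtains S where "manip_coalition C w n P a S"
    "real (card S) = (\<Sum>al\<in>C - {b}. max 0 (score C w n P al - score C w n P b))"
proof -
  define g where "g al = \<lfloor>score C w n P al - score C w n P b\<rfloor>" for al
  define e where "e al = nat (g al)" for al
  have g: "real_of_int (g al) = score C w n P al - score C w n P b" if "al \<in> C" for al
  proof -
    have "score C w n P al - score C w n P b \<in> \<int>"
      using score_Ints[OF wp P that] score_Ints[OF wp P ab(2)] by (rule Ints_diff)
    then show ?thesis
      by (simp add: g_def)
  qed
  have "real_of_int (sum g (C - {b})) \<le> 0"
    using sum_le g by simp
  then have "sum g (C - {b}) \<le> 0"
    by linarith
  \<comment> \<open>\<open>e al\<close> voters switch to vetoing \<open>al\<close>, and \<open>d al\<close> voters stop vetoing it\<close>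
  then obtain d where d: "\<forall>al\<in>C - {b}. d al \<le> nat (- g al)" "sum d (C - {b}) = sum e (C - {b})"
    using ex_nat_le_neg_part_with_sum[of "C - {b}"] finite_C unfolding e_def by blast
  have e: "real (e al) = max 0 (score C w n P al - score C w n P b)" if "al \<in> C - {b}" for al
    using g[of al] that by (simp add: e_def max_def)
  have d_le: "real (d al) \<le> max 0 (score C w n P b - score C w n P al)" if "al \<in> C - {b}" for al
  proof -
    have "d al \<le> nat (- g al)"
      using d(1) that by blast
    then have "real (d al) \<le> max 0 (- real_of_int (g al))"
      by linarith
    then show ?thesis
      using g[of al] that by simp
  qed
  have "score C w n P al - score C w n P b \<le> real (e al) - real (d al)" if "al \<in> C - {b}" for al
    using e[OF that] d_le[OF that] by (simp add: max_def split: if_splits)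
  moreover have "d al \<le> Ncount n P t" if "al \<in> C - {b}" "t \<in> rankings" for al t
  proof -
    have "max 0 (score C w n P b - score C w n P al) \<le> \<Delta>"
      using gap ab(2) that(1) by auto
    then show ?thesis
      using d_le[OF that(1)] counts that(2) by (meson of_nat_le_iff order_trans)
  qed
  ultimately obtain S where S: "manip_coalition C w n P a S" "card S = sum e (C - {b})"
    using manip_coalition_of_last_counts[OF P ab wp d(2)] by blast
  then show ?thesis
    using that e by (simp add: of_nat_sum)
qed

lemma MCS_close_veto:
  assumes P: "\<forall>i<n. P i \<in> rankings" and ab: "a \<in> C" "b \<in> C" "b \<noteq> a" and wp: "w_penult = 1"
    and gap: "\<forall>al\<in>C. score C w n P b - score C w n P al \<le> \<Delta>"
    and counts: "\<forall>t\<in>rankings. \<Delta> \<le> real (Ncount n P t)"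
    and lower: "Q3 C w n P a b \<le> MCS C w n P a"
  shows "ereal_close (Kconst (card C) w) (MCS C w n P a) (Q3 C w n P a b)"
proof (cases "Q3 C w n P a b = \<infinity>")
  case True
  then show ?thesis
    using lower by (simp add: ereal_close_def)
next
  case False
  then have "{ereal (sum x (T_above C b a)) | x y. Q3_feasible C w n P a b x y} \<noteq> {}"
    unfolding Q3_def by (metis Inf_empty top_ereal_def)
  then obtain x y where "Q3_feasible C w n P a b x y"
    by blast
  then obtain S where S: "manip_coalition C w n P a S"
    "real (card S) = (\<Sum>al\<in>C - {b}. max 0 (score C w n P al - score C w n P b))"
    using ex_coalition_veto[OF P ab wp veto_feasible_bounds(1)[OF wp ab(1,2)] gap counts] by blast
  have "ereal (real (card S)) \<le> Q3 C w n P a b"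
    unfolding Q3_def
  proof (rule Inf_greatest)
    fix z
    assume "z \<in> {ereal (sum x (T_above C b a)) | x y. Q3_feasible C w n P a b x y}"
    then show "ereal (real (card S)) \<le> z"
      using veto_feasible_bounds(2)[OF wp ab(1,2)] S(2) by auto
  qed
  then have "MCS C w n P a = Q3 C w n P a b"
    using MCS_le_card[OF S(1)] lower by simp
  moreover obtain q where "Q3 C w n P a b = ereal q"
    using False Q3_nonneg by (cases "Q3 C w n P a b") auto
  ultimately show ?thesis
    using wp by (simp add: ereal_close_def Kconst_def)
qed

lemma MCS_close:
  assumes P: "\<forall>i<n. P i \<in> rankings" and ab: "a \<in> C" "b \<in> C" "b \<noteq> a" and \<Delta>: "0 \<le> \<Delta>"
    and gap: "\<forall>al\<in>C. \<bar>score C w n P al - score C w n P b\<bar> \<le> \<Delta>"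
    and counts: "\<forall>t\<in>rankings.
      (if w_penult < 1 then \<Delta> / (1 - w_penult) + Kconst (card C) w else \<Delta>) \<le> real (Ncount n P t)"
    and lower: "Q3 C w n P a b \<le> MCS C w n P a"
  shows "ereal_close (Kconst (card C) w) (MCS C w n P a) (Q3 C w n P a b)"
proof (cases "w_penult < 1")
  case True
  have "\<forall>al\<in>C. score C w n P al - score C w n P b \<le> \<Delta>"
    using gap by (simp add: abs_le_iff)
  moreover have "\<forall>t\<in>rankings. \<Delta> / (1 - w_penult) + Kconst (card C) w \<le> real (Ncount n P t)"
    using counts True by simp
  ultimately show ?thesis
    by (rule MCS_close_nonveto[OF P ab True \<Delta> _ _ lower])
next
  case False
  then have wp: "w_penult = 1"
    using w_penult_bounds by simp
  have "\<forall>al\<in>C. score C w n P b - score C w n P al \<le> \<Delta>"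
    using gap by (simp add: abs_le_iff)
  moreover have "\<forall>t\<in>rankings. \<Delta> \<le> real (Ncount n P t)"
    using counts False by simp
  ultimately show ?thesis
    by (rule MCS_close_veto[OF P ab wp _ _ lower])
qed

lemma good_event_if_regular:
  assumes P: "P \<in> profiles C n" and inj: "inj_on (score C w n P) C"
    and gap: "\<forall>al\<in>C. \<forall>be\<in>C. \<bar>score C w n P al - score C w n P be\<bar> \<le> \<Delta>"
    and counts: "\<forall>t\<in>rankings.
      (if w_penult < 1 then \<Delta> / (1 - w_penult) + Kconst (card C) w else \<Delta>) \<le> real (Ncount n P t)"
  shows "P \<in> good_event C w n"
proof -
  have P': "\<forall>i<n. P i \<in> rankings"
    using P profiles_rankings by blast
  have "C \<noteq> {}" "C - {a} \<noteq> {}" for a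
    using card_C finite_C by (auto dest!: subset_singletonD)
  then obtain a where a: "a \<in> C" "\<forall>al\<in>C. al \<noteq> a \<longrightarrow> score C w n P al < score C w n P a"
    using ex_strict_argmax[OF finite_C _ inj] by blast
  have "Min (Q3 C w n P a ` (C - {a})) \<in> Q3 C w n P a ` (C - {a})"
    using finite_C \<open>C - {a} \<noteq> {}\<close> by simp
  then obtain b where b: "b \<in> C - {a}" "Min (Q3 C w n P a ` (C - {a})) = Q3 C w n P a b"
    by blast
  have ab: "a \<in> C" "b \<in> C" "b \<noteq> a"
    using a(1) b(1) by auto
  have "Q3 C w n P a b \<le> MCS C w n P a"
    using Min_Q3_le_MCS[OF P' a(1)] b(2) by simp
  moreover have "\<forall>al\<in>C. \<bar>score C w n P al - score C w n P b\<bar> \<le> \<Delta>"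
    using gap ab by auto
  moreover from this have "0 \<le> \<Delta>"
    using ab(2) by force
  ultimately have "ereal_close (Kconst (card C) w) (MCS C w n P a) (Q3 C w n P a b)"
    using MCS_close[OF P' ab _ _ counts] by simp
  then show ?thesis
    unfolding good_event_def using P a b(2) by auto
qed

end

lemma tendsto_sqrt_inverse_0:
  assumes "r > 0"
  shows "(\<lambda>n. sqrt (2 / (r * real n))) \<longlonglongrightarrow> 0"
proof -
  have "filterlim (\<lambda>n. r * real n) at_top sequentially"
    using assms by (intro filterlim_tendsto_pos_mult_at_top[OF tendsto_const] filterlim_real_sequentially)
  then have "(\<lambda>n. 2 / (r * real n)) \<longlonglongrightarrow> 0"
    by (intro tendsto_divide_0[OF tendsto_const] filterlim_at_top_imp_at_infinity)
  then show ?thesis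
    using tendsto_real_sqrt[of _ 0] by simp
qed

lemma prob_pmf_of_set_mono:
  assumes "finite S" "S \<noteq> {}" "\<And>P. P \<in> S \<Longrightarrow> P \<in> A \<Longrightarrow> P \<in> B"
  shows "measure_pmf.prob (pmf_of_set S) A \<le> measure_pmf.prob (pmf_of_set S) B"
proof -
  have "card (S \<inter> A) \<le> card (S \<inter> B)"
    using assms by (intro card_mono) auto
  then show ?thesis
    using assms by (simp add: measure_pmf_of_set divide_right_mono)
qed

lemma tendsto_prob_Int_1:
  assumes "(\<lambda>n. measure_pmf.prob (p n) (A n)) \<longlonglongrightarrow> 1" "(\<lambda>n. measure_pmf.prob (p n) (B n)) \<longlonglongrightarrow> 1"
  shows "(\<lambda>n. measure_pmf.prob (p n) (A n \<inter> B n)) \<longlonglongrightarrow> 1"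
proof -
  have lim: "(\<lambda>n. measure_pmf.prob (p n) (A n) + measure_pmf.prob (p n) (B n) - 1) \<longlonglongrightarrow> 1"
    using tendsto_diff[OF tendsto_add[OF assms] tendsto_const[of 1]] by simp
  have "measure_pmf.prob (p n) (A n) + measure_pmf.prob (p n) (B n) - 1 \<le> measure_pmf.prob (p n) (A n \<inter> B n)" for n
  proof -
    have "measure_pmf.prob (p n) (A n \<union> B n) =
        measure_pmf.prob (p n) (A n) + measure_pmf.prob (p n) (B n) - measure_pmf.prob (p n) (A n \<inter> B n)"
      by (rule measure_Un3) (simp_all add: measure_pmf.fmeasurable_eq_sets)
    then show ?thesis
      using measure_pmf.prob_le_1[of "p n" "A n \<union> B n"] by linarith
  qed
  then show ?thesis
    by (intro tendsto_sandwich[OF _ _ lim tendsto_const]) simp_all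
qed

lemma tendsto_prob_INT_1:
  assumes "finite J" "\<forall>j\<in>J. (\<lambda>n. measure_pmf.prob (p n) (A j n)) \<longlonglongrightarrow> 1"
  shows "(\<lambda>n. measure_pmf.prob (p n) (\<Inter>j\<in>J. A j n)) \<longlonglongrightarrow> 1"
  using assms
proof (induction J rule: finite_induct)
  case empty
  then show ?case by simp
next
  case (insert j J)
  then show ?case
    using tendsto_prob_Int_1[of p "A j"] by simp
qed

lemma Pi_pmf_deviation_le:
  fixes p :: "'a pmf" and f :: "'a \<Rightarrow> real"
  assumes f: "\<forall>t\<in>set_pmf p. \<bar>f t\<bar> \<le> 1" and \<epsilon>: "\<epsilon> > 0" and n: "n > 0"
  shows "measure_pmf.prob (Pi_pmf {..<n} d (\<lambda>_. p))
     {P. \<epsilon> * real n \<le> \<bar>(\<Sum>i<n. f (P i)) - real n * measure_pmf.expectation p f\<bar>}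
     \<le> 2 * exp (- (\<epsilon>\<^sup>2 * real n / 2))"
proof -
  define q where "q = Pi_pmf {..<n} d (\<lambda>_. p)"
  have E: "measure_pmf.expectation q (\<lambda>P. f (P i)) = measure_pmf.expectation p f" if "i < n" for i
  proof -
    have "measure_pmf.expectation q (\<lambda>P. f (P i)) = measure_pmf.expectation (map_pmf (\<lambda>P. P i) q) f"
      by simp
    also have "map_pmf (\<lambda>P. P i) q = p"
      using Pi_pmf_component[of "{..<n}" i d "\<lambda>_. p"] that by (simp add: q_def)
    finally show ?thesis .
  qed
  interpret H: Hoeffding_ineq "measure_pmf q" "{..<n}" "\<lambda>i P. f (P i)" "\<lambda>_. -1" "\<lambda>_. 1"
    "real n * measure_pmf.expectation p f"
  proof unfold_locales
    show "prob_space.indep_vars (measure_pmf q) (\<lambda>_. borel) (\<lambda>i P. f (P i)) {..<n}"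
      unfolding q_def
      by (rule prob_space.indep_vars_compose2[OF prob_space_measure_pmf indep_vars_Pi_pmf]) auto
    fix i
    assume i: "i \<in> {..<n}"
    show "AE P in measure_pmf q. f (P i) \<in> {-1..1}"
    proof (rule AE_pmfI)
      fix P
      assume "P \<in> set_pmf q"
      then have "P i \<in> set_pmf p"
        using i set_Pi_pmf_subset'[of "{..<n}" d "\<lambda>_. p"] by (auto simp: q_def PiE_dflt_def)
      then show "f (P i) \<in> {-1..1}"
        using f by (auto simp: abs_le_iff)
    qed
  qed (use E in simp_all)
  have "measure_pmf.prob q {P \<in> space (measure_pmf q). \<epsilon> * real n \<le> \<bar>(\<Sum>i<n. f (P i)) - real n * measure_pmf.expectation p f\<bar>}
      \<le> 2 * exp (- 2 * (\<epsilon> * real n)\<^sup>2 / (\<Sum>i<n. (1 - - 1)\<^sup>2))"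
    by (rule H.Hoeffding_ineq_abs_ge) (use \<epsilon> n in auto)
  also have "- 2 * (\<epsilon> * real n)\<^sup>2 / (\<Sum>i<n. (1 - - 1 :: real)\<^sup>2) = - (\<epsilon>\<^sup>2 * real n / 2)"
    using n by (simp add: power2_eq_square field_simps)
  finally show ?thesis
    by (simp add: q_def)
qed

lemma Pi_pmf_deviation_tendsto_0:
  fixes p :: "'a pmf" and f :: "'a \<Rightarrow> real"
  assumes f: "\<forall>t\<in>set_pmf p. \<bar>f t\<bar> \<le> 1" and \<epsilon>: "\<epsilon> > 0"
  shows "(\<lambda>n. measure_pmf.prob (Pi_pmf {..<n} d (\<lambda>_. p))
     {P. \<epsilon> * real n \<le> \<bar>(\<Sum>i<n. f (P i)) - real n * measure_pmf.expectation p f\<bar>}) \<longlonglongrightarrow> 0"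
proof (rule tendsto_sandwich[OF _ _ tendsto_const])
  show "\<forall>\<^sub>F n in sequentially. measure_pmf.prob (Pi_pmf {..<n} d (\<lambda>_. p))
     {P. \<epsilon> * real n \<le> \<bar>(\<Sum>i<n. f (P i)) - real n * measure_pmf.expectation p f\<bar>} \<le> 2 * exp (- (\<epsilon>\<^sup>2 * real n / 2))"
    using eventually_gt_at_top[of 0] by eventually_elim (rule Pi_pmf_deviation_le[OF f \<epsilon>])
  have "filterlim (\<lambda>n. \<epsilon>\<^sup>2 / 2 * real n) at_top sequentially"
    using \<epsilon> by (intro filterlim_tendsto_pos_mult_at_top[OF tendsto_const] filterlim_real_sequentially) auto
  then have "(\<lambda>n. exp (- (\<epsilon>\<^sup>2 / 2 * real n))) \<longlonglongrightarrow> 0"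
    by (intro filterlim_compose[OF exp_at_bot]) (simp add: filterlim_uminus_at_bot)
  then show "(\<lambda>n. 2 * exp (- (\<epsilon>\<^sup>2 * real n / 2))) \<longlonglongrightarrow> 0"
    using tendsto_mult_right_zero[of _ sequentially 2] by simp
qed simp

lemma sum_card_filter_swap:
  assumes "finite A" "finite B"
  shows "(\<Sum>a\<in>A. card {b\<in>B. R a b}) = (\<Sum>b\<in>B. card {a\<in>A. R a b})"
proof -
  have card_eq: "card {x\<in>X. Q x} = (\<Sum>x\<in>X. if Q x then 1 else 0)" if "finite X" for X and Q :: "'d \<Rightarrow> bool"
    using that by (simp add: sum.If_cases Int_def conj_commute)
  have "(\<Sum>a\<in>A. card {b\<in>B. R a b}) = (\<Sum>a\<in>A. \<Sum>b\<in>B. if R a b then 1 else 0)"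
    using card_eq[OF assms(2)] by simp
  also have "\<dots> = (\<Sum>b\<in>B. \<Sum>a\<in>A. if R a b then 1 else 0)"
    by (rule sum.swap)
  also have "\<dots> = (\<Sum>b\<in>B. card {a\<in>A. R a b})"
    using card_eq[OF assms(1)] by simp
  finally show ?thesis .
qed

definition swap_voters :: "'c \<Rightarrow> 'c \<Rightarrow> nat set \<Rightarrow> (nat \<Rightarrow> 'c list) \<Rightarrow> nat \<Rightarrow> 'c list" where
  "swap_voters x y J P i = (if i \<in> J then map (Transposition.transpose x y) (P i) else P i)"

lemma swap_voters_swap_voters [simp]: "swap_voters x y J (swap_voters x y J P) = P"
  by (auto simp: swap_voters_def fun_eq_iff comp_def)

context scoring_rule
begin

lemma finite_profiles: "finite (profiles C n)"
  unfolding profiles_def by (simp add: finite_PiE)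

lemma profiles_nonempty: "profiles C n \<noteq> {}"
  unfolding profiles_def using rankings_nonempty by (simp add: PiE_eq_empty_iff)

lemma pmf_of_set_profiles: "pmf_of_set (profiles C n) = Pi_pmf {..<n} undefined (\<lambda>_. pmf_of_set rankings)"
proof -
  have "PiE_dflt {..<n} undefined (\<lambda>_. rankings) = profiles C n"
    by (auto simp: PiE_dflt_def profiles_def PiE_def extensional_def Pi_def)
  then show ?thesis
    using Pi_pmf_of_set[of "{..<n}" "\<lambda>_. rankings" undefined] rankings_nonempty by simp
qed

lemma prob_profiles_tendsto_1:
  assumes "(\<lambda>n. measure_pmf.prob (pmf_of_set (profiles C n)) (B n)) \<longlonglongrightarrow> 0"
    and "\<And>n P. P \<in> profiles C n \<Longrightarrow> P \<notin> A n \<Longrightarrow> P \<in> B n"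
  shows "(\<lambda>n. measure_pmf.prob (pmf_of_set (profiles C n)) (A n)) \<longlonglongrightarrow> 1"
proof (rule tendsto_sandwich[OF _ _ _ tendsto_const])
  have "measure_pmf.prob (pmf_of_set (profiles C n)) (UNIV - A n) \<le> measure_pmf.prob (pmf_of_set (profiles C n)) (B n)" for n
    using assms(2) by (intro prob_pmf_of_set_mono finite_profiles profiles_nonempty) auto
  then have "1 - measure_pmf.prob (pmf_of_set (profiles C n)) (B n) \<le> measure_pmf.prob (pmf_of_set (profiles C n)) (A n)" for n
    using measure_pmf.prob_compl[of "A n" "pmf_of_set (profiles C n)"] by (simp add: Compl_eq_Diff_UNIV)
      (metis diff_le_eq add.commute)
  then show "\<forall>\<^sub>F n in sequentially. 1 - measure_pmf.prob (pmf_of_set (profiles C n)) (B n)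
      \<le> measure_pmf.prob (pmf_of_set (profiles C n)) (A n)"
    by simp
  show "(\<lambda>n. 1 - measure_pmf.prob (pmf_of_set (profiles C n)) (B n)) \<longlonglongrightarrow> 1"
    using tendsto_diff[OF tendsto_const assms(1), of 1] by simp
qed simp

lemma prob_deviation_tendsto_0:
  assumes "\<forall>t\<in>rankings. \<bar>f t\<bar> \<le> 1" "\<epsilon> > 0"
  shows "(\<lambda>n. measure_pmf.prob (pmf_of_set (profiles C n))
    {P. \<epsilon> * real n \<le> \<bar>(\<Sum>i<n. f (P i)) - real n * (sum f rankings / card rankings)\<bar>}) \<longlonglongrightarrow> 0"
  using Pi_pmf_deviation_tendsto_0[of "pmf_of_set rankings" f \<epsilon> undefined] assms rankings_nonempty
  by (simp add: pmf_of_set_profiles integral_pmf_of_set)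

lemma transpose_ranking:
  "x \<in> C \<Longrightarrow> y \<in> C \<Longrightarrow> t \<in> rankings \<Longrightarrow> map (Transposition.transpose x y) t \<in> rankings"
  using permutations_of_set_image_permutes[OF permutes_swap_id, of x C y] by blast

lemma sigma_transpose:
  assumes "t \<in> rankings" "c \<in> C"
  shows "sigma w (map (Transposition.transpose x y) t) (Transposition.transpose x y c) = sigma w t c"
  using pos_map_inj[OF inj_transpose[of x y]] permutations_of_setD[OF assms(1)] assms(2) by (simp add: sigma_def)

lemma sum_sigma_eq:
  assumes x: "x \<in> C" and y: "y \<in> C"
  shows "(\<Sum>t\<in>rankings. sigma w t x) = (\<Sum>t\<in>rankings. sigma w t y)"
proof -
  have "bij_betw (map (Transposition.transpose x y)) rankings rankings"
    by (rule bij_betwI[of _ _ _ "map (Transposition.transpose x y)"]) (use transpose_ranking x y in \<open>auto simp: comp_def\<close>)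
  then have "(\<Sum>t\<in>rankings. sigma w t y) = (\<Sum>t\<in>rankings. sigma w (map (Transposition.transpose x y) t) y)"
    by (rule sum.reindex_bij_betw[symmetric])
  also have "\<dots> = (\<Sum>t\<in>rankings. sigma w t x)"
    using sigma_transpose[OF _ x, of _ x y] by simp
  finally show ?thesis ..
qed

lemma prob_score_gap_tendsto_1:
  assumes x: "x \<in> C" and y: "y \<in> C" and \<delta>: "\<delta> > 0"
  shows "(\<lambda>n. measure_pmf.prob (pmf_of_set (profiles C n))
    {P. \<bar>score C w n P x - score C w n P y\<bar> \<le> \<delta> * real n}) \<longlonglongrightarrow> 1"
proof (rule prob_profiles_tendsto_1)
  define f where "f t = sigma w t x - sigma w t y" for t
  have "\<forall>t\<in>rankings. \<bar>f t\<bar> \<le> 1"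
    using sigma_bounds[OF _ x] sigma_bounds[OF _ y] by (fastforce simp: f_def abs_le_iff)
  moreover have "sum f rankings = 0"
    using sum_sigma_eq[OF x y] by (simp add: f_def sum_subtractf)
  ultimately show "(\<lambda>n. measure_pmf.prob (pmf_of_set (profiles C n)) {P. \<delta> * real n \<le> \<bar>\<Sum>i<n. f (P i)\<bar>}) \<longlonglongrightarrow> 0"
    using prob_deviation_tendsto_0[OF _ \<delta>, of f] by simp
  fix n P
  assume "P \<in> profiles C n" "P \<notin> {P. \<bar>score C w n P x - score C w n P y\<bar> \<le> \<delta> * real n}"
  then show "P \<in> {P. \<delta> * real n \<le> \<bar>\<Sum>i<n. f (P i)\<bar>}"
    using score_eq_sum_voters[of n P] profiles_rankings by (simp add: f_def sum_subtractf)
qed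

lemma prob_count_tendsto_1:
  assumes t: "t \<in> rankings"
  shows "(\<lambda>n. measure_pmf.prob (pmf_of_set (profiles C n))
    {P. real n / (2 * card rankings) \<le> real (Ncount n P t)}) \<longlonglongrightarrow> 1"
proof (rule prob_profiles_tendsto_1)
  define f where "f u = (if u = t then 1 else 0 :: real)" for u
  have "\<forall>u\<in>rankings. \<bar>f u\<bar> \<le> 1" "1 / (2 * card rankings) > 0"
    using card_rankings_pos by (simp_all add: f_def)
  moreover have "sum f rankings = 1"
    using t by (simp add: f_def)
  ultimately show "(\<lambda>n. measure_pmf.prob (pmf_of_set (profiles C n))
      {P. 1 / (2 * card rankings) * real n \<le> \<bar>(\<Sum>i<n. f (P i)) - real n * (1 / card rankings)\<bar>}) \<longlonglongrightarrow> 0"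
    using prob_deviation_tendsto_0[of f "1 / (2 * card rankings)"] by simp
  fix n P
  assume "P \<notin> {P. real n / (2 * card rankings) \<le> real (Ncount n P t)}"
  moreover have "real (Ncount n P t) = (\<Sum>i<n. f (P i))"
    unfolding Ncount_def f_def by (simp add: sum.If_cases Int_def)
  ultimately show "P \<in> {P. 1 / (2 * card rankings) * real n \<le> \<bar>(\<Sum>i<n. f (P i)) - real n * (1 / card rankings)\<bar>}"
    by (simp add: field_simps)
qed

lemma swap_voters_profiles:
  assumes "x \<in> C" "y \<in> C" "P \<in> profiles C n" "J \<subseteq> {..<n}"
  shows "swap_voters x y J P \<in> profiles C n"
  using assms transpose_ranking[OF assms(1,2)]
  by (auto simp: profiles_def swap_voters_def PiE_def extensional_def Pi_def)

lemma score_diff_swap_voters: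
  assumes x: "x \<in> C" and y: "y \<in> C" and P: "P \<in> profiles C n" and J: "J \<subseteq> {..<n}"
  shows "score C w n (swap_voters x y J P) x - score C w n (swap_voters x y J P) y =
    score C w n P x - score C w n P y - 2 * (\<Sum>i\<in>J. sigma w (P i) x - sigma w (P i) y)"
proof -
  define D where "D t = sigma w t x - sigma w t y" for t
  have "D (swap_voters x y J P i) = D (P i) - (if i \<in> J then 2 * D (P i) else 0)" if "i < n" for i
    using sigma_transpose[OF profiles_rankings[OF P that] x, of x y]
      sigma_transpose[OF profiles_rankings[OF P that] y, of x y]
    by (auto simp: swap_voters_def D_def)
  then have "(\<Sum>i<n. D (swap_voters x y J P i)) = (\<Sum>i<n. D (P i)) - 2 * (\<Sum>i\<in>J. D (P i))"
    using J by (simp add: sum_subtractf sum.If_cases sum_distrib_left Int_absorb1)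
  moreover have "P' \<in> profiles C n \<Longrightarrow> score C w n P' x - score C w n P' y = (\<Sum>i<n. D (P' i))" for P'
    using score_eq_sum_voters[of n P'] profiles_rankings by (simp add: D_def sum_subtractf)
  ultimately show ?thesis
    using swap_voters_profiles[OF x y P J] P by (simp add: D_def)
qed

definition extreme_voters :: "'c \<Rightarrow> 'c \<Rightarrow> nat \<Rightarrow> (nat \<Rightarrow> 'c list) \<Rightarrow> nat set" where
  "extreme_voters x y n P = {i\<in>{..<n}. sigma w (P i) x - sigma w (P i) y = 1}"

lemma card_tying_swaps_le:
  assumes x: "x \<in> C" and y: "y \<in> C" and P: "P \<in> profiles C n"
  defines "k \<equiv> card (extreme_voters x y n P)"
  shows "card {J\<in>Pow {..<n}. score C w n (swap_voters x y J P) x = score C w n (swap_voters x y J P) y}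
    \<le> 2 ^ (n - k) * (k choose (k div 2))"
proof -
  have "score C w n (swap_voters x y J P) x = score C w n (swap_voters x y J P) y \<longleftrightarrow>
      (\<Sum>i\<in>J. sigma w (P i) x - sigma w (P i) y) = (score C w n P x - score C w n P y) / 2"
    if J: "J \<subseteq> {..<n}" for J
  proof -
    have "score C w n (swap_voters x y J P) x = score C w n (swap_voters x y J P) y \<longleftrightarrow>
        score C w n (swap_voters x y J P) x - score C w n (swap_voters x y J P) y = 0"
      by simp
    then show ?thesis
      unfolding score_diff_swap_voters[OF x y P J] by (simp add: field_simps eq_commute)
  qed
  then have "{J\<in>Pow {..<n}. score C w n (swap_voters x y J P) x = score C w n (swap_voters x y J P) y} =
      {J\<in>Pow {..<n}. (\<Sum>i\<in>J. sigma w (P i) x - sigma w (P i) y) = (score C w n P x - score C w n P y) / 2}"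
    by auto
  also have "card \<dots> \<le> 2 ^ (card {..<n} - k) * (k choose (k div 2))"
    unfolding k_def extreme_voters_def by (rule card_subsets_with_sum_le) auto
  finally show ?thesis
    by simp
qed

text \<open>A Littlewood--Offord argument: swapping \<open>x\<close> and \<open>y\<close> in the ballots of a set \<open>J\<close>
  of voters permutes the profiles, and for a fixed profile few sets \<open>J\<close> produce a tie.\<close>
lemma card_ties_le:
  assumes x: "x \<in> C" and y: "y \<in> C"
  shows "real (card {P \<in> profiles C n. score C w n P x = score C w n P y}) \<le>
    (\<Sum>P\<in>profiles C n. central_binomial_prob (card (extreme_voters x y n P)))"
proof -
  define U where "U = profiles C n"
  define Z where "Z = {P\<in>U. score C w n P x = score C w n P y}"
  define k where "k P = card (extreme_voters x y n P)" for P
  have same_card: "card {P\<in>U. swap_voters x y J P \<in> Z} = card Z" if "J \<in> Pow {..<n}" for J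
  proof (rule bij_betw_same_card)
    have "swap_voters x y J P \<in> U" if "P \<in> U" for P
      using swap_voters_profiles[OF x y, of P n J] that \<open>J \<in> Pow {..<n}\<close> by (simp add: U_def)
    then show "bij_betw (swap_voters x y J) {P\<in>U. swap_voters x y J P \<in> Z} Z"
      by (intro bij_betwI[where g = "swap_voters x y J"]) (auto simp: Z_def)
  qed
  have tying_swaps: "card {J\<in>Pow {..<n}. swap_voters x y J P \<in> Z} \<le> 2 ^ (n - k P) * (k P choose (k P div 2))"
    if P: "P \<in> U" for P
  proof -
    have "{J\<in>Pow {..<n}. swap_voters x y J P \<in> Z} =
        {J\<in>Pow {..<n}. score C w n (swap_voters x y J P) x = score C w n (swap_voters x y J P) y}"
      using swap_voters_profiles[OF x y, of P n] P by (auto simp: Z_def U_def)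
    then show ?thesis
      using card_tying_swaps_le[OF x y, of P n] P by (simp add: U_def k_def)
  qed
  have "2 ^ n * card Z = (\<Sum>J\<in>Pow {..<n}. card {P\<in>U. swap_voters x y J P \<in> Z})"
    using same_card by (simp add: card_Pow)
  also have "\<dots> = (\<Sum>P\<in>U. card {J\<in>Pow {..<n}. swap_voters x y J P \<in> Z})"
    using finite_profiles by (simp add: U_def sum_card_filter_swap)
  also have "\<dots> \<le> (\<Sum>P\<in>U. 2 ^ (n - k P) * (k P choose (k P div 2)))"
    by (intro sum_mono tying_swaps)
  finally have "real (2 ^ n * card Z) \<le> real (\<Sum>P\<in>U. 2 ^ (n - k P) * (k P choose (k P div 2)))"
    by (simp only: of_nat_le_iff)
  then have "2 ^ n * real (card Z) \<le> (\<Sum>P\<in>U. real (2 ^ (n - k P) * (k P choose (k P div 2))))"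
    by (simp only: of_nat_sum of_nat_mult of_nat_power of_nat_numeral)
  also have "\<dots> = (\<Sum>P\<in>U. 2 ^ n * central_binomial_prob (k P))"
  proof (intro sum.cong refl)
    fix P
    have "k P \<le> n"
      using card_mono[of "{..<n}" "extreme_voters x y n P"] by (auto simp: k_def extreme_voters_def)
    then have "(2::real) ^ n = 2 ^ (n - k P) * 2 ^ k P"
      by (simp flip: power_add)
    then show "real (2 ^ (n - k P) * (k P choose (k P div 2))) = 2 ^ n * central_binomial_prob (k P)"
      by (simp add: central_binomial_prob_def)
  qed
  finally show ?thesis
    by (simp add: Z_def U_def k_def sum_distrib_left[symmetric])
qed

lemma prob_tie_le:
  assumes x: "x \<in> C" and y: "y \<in> C" and rn: "0 < r * real n"
  shows "measure_pmf.prob (pmf_of_set (profiles C n)) {P. score C w n P x = score C w n P y} \<le>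
    measure_pmf.prob (pmf_of_set (profiles C n))
      {P. real (card (extreme_voters x y n P)) < r * real n}
    + sqrt (2 / (r * real n))"
proof -
  define U where "U = profiles C n"
  define k where "k P = card (extreme_voters x y n P)" for P
  define L where "L = {P. real (k P) < r * real n}"
  have U: "finite U" "U \<noteq> {}" "0 < real (card U)"
    using finite_profiles profiles_nonempty by (auto simp: U_def card_gt_0_iff)
  have bound: "central_binomial_prob (k P) \<le> (if P \<in> L then 1 else 0) + sqrt (2 / (r * real n))" for P
  proof (cases "P \<in> L")
    case True
    have "0 \<le> sqrt (2 / (r * real n))"
      using rn by simp
    with True show ?thesis
      using central_binomial_prob_le_1[of "k P"] by (simp del: real_sqrt_ge_0_iff)
  next
    case False
    then show ?thesis
      using central_binomial_prob_le_sqrt[of "r * real n" "k P"] rn by (simp add: L_def)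
  qed
  have "measure_pmf.prob (pmf_of_set U) {P. score C w n P x = score C w n P y}
      = real (card {P \<in> U. score C w n P x = score C w n P y}) / real (card U)"
    using U by (simp add: measure_pmf_of_set Int_def conj_commute)
  also have "\<dots> \<le> (\<Sum>P\<in>U. central_binomial_prob (k P)) / real (card U)"
    using card_ties_le[OF x y, of n] U(3) by (simp add: U_def k_def divide_right_mono)
  also have "\<dots> \<le> (\<Sum>P\<in>U. (if P \<in> L then 1 else 0) + sqrt (2 / (r * real n))) / real (card U)"
    by (intro divide_right_mono sum_mono bound) simp
  also have "\<dots> = real (card (U \<inter> L)) / real (card U) + sqrt (2 / (r * real n))"
    using U by (simp add: sum.distrib sum.If_cases add_divide_distrib)
  also have "real (card (U \<inter> L)) / real (card U) = measure_pmf.prob (pmf_of_set U) L"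
    using U by (simp add: measure_pmf_of_set)
  finally show ?thesis
    by (simp add: U_def L_def k_def)
qed

lemma sigma_last: "t \<in> rankings \<Longrightarrow> sigma w t (last t) = 0"
  using pos_eq_length_iff[of t "last t"] last_ranking[of t] permutations_of_setD[of t C]
    length_finite_permutations_of_set[of t C] w_last
  by (simp add: sigma_def)

lemma prob_no_tie_tendsto_1:
  assumes x: "x \<in> C" and y: "y \<in> C" and xy: "x \<noteq> y"
  shows "(\<lambda>n. measure_pmf.prob (pmf_of_set (profiles C n)) {P. score C w n P x \<noteq> score C w n P y}) \<longlonglongrightarrow> 1"
proof (rule prob_profiles_tendsto_1)
  define f where "f t = (if sigma w t x - sigma w t y = 1 then 1 else 0 :: real)" for t
  define \<mu> where "\<mu> = sum f rankings / card rankings"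
  define E where "E n = {P. \<mu> / 2 * real n \<le> \<bar>(\<Sum>i<n. f (P i)) - real n * \<mu>\<bar>}" for n
  obtain us where "\<forall>al\<in>C - {x}. us al \<in> T_first C x \<and> last (us al) = al"
    using ex_T_first_last[OF x] by blast
  then obtain u where u: "u \<in> T_first C x" "last u = y"
    using y xy by blast
  then have "u \<in> rankings" "f u = 1"
    using T_first_subset sigma_T_first[OF u(1)] sigma_last by (auto simp: f_def)
  then have "0 < sum f rankings"
    by (intro sum_pos2[OF finite_rankings \<open>u \<in> rankings\<close>]) (auto simp: f_def)
  then have \<mu>: "0 < \<mu> / 2"
    using card_rankings_pos by (simp add: \<mu>_def)
  have "\<forall>t\<in>rankings. \<bar>f t\<bar> \<le> 1"
    by (simp add: f_def)
  from prob_deviation_tendsto_0[OF this \<mu>]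
  have "(\<lambda>n. measure_pmf.prob (pmf_of_set (profiles C n)) (E n)) \<longlonglongrightarrow> 0"
    unfolding E_def \<mu>_def .
  moreover have "(\<lambda>n. sqrt (2 / (\<mu> / 2 * real n))) \<longlonglongrightarrow> 0"
    using \<mu> by (rule tendsto_sqrt_inverse_0)
  ultimately have lim: "(\<lambda>n. measure_pmf.prob (pmf_of_set (profiles C n)) (E n) + sqrt (2 / (\<mu> / 2 * real n))) \<longlonglongrightarrow> 0"
    using tendsto_add[of _ 0 _ _ 0] by simp
  have "measure_pmf.prob (pmf_of_set (profiles C n)) {P. score C w n P x = score C w n P y}
      \<le> measure_pmf.prob (pmf_of_set (profiles C n)) (E n) + sqrt (2 / (\<mu> / 2 * real n))" if "0 < n" for n
  proof -
    have "real (card (extreme_voters x y n P)) = (\<Sum>i<n. f (P i))" for P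
      by (simp add: f_def extreme_voters_def sum.If_cases Int_def)
    then have "{P. real (card (extreme_voters x y n P)) < \<mu> / 2 * real n} \<subseteq> E n"
      using \<mu> unfolding E_def by (auto simp: abs_if mult.commute)
    then have "measure_pmf.prob (pmf_of_set (profiles C n))
        {P. real (card (extreme_voters x y n P)) < \<mu> / 2 * real n}
        \<le> measure_pmf.prob (pmf_of_set (profiles C n)) (E n)"
      by (rule measure_pmf.finite_measure_mono) simp
    moreover have "0 < \<mu> / 2 * real n"
      using \<mu> that by simp
    ultimately show ?thesis
      using prob_tie_le[OF x y, of "\<mu> / 2" n] by linarith
  qed
  then show "(\<lambda>n. measure_pmf.prob (pmf_of_set (profiles C n)) {P. score C w n P x = score C w n P y}) \<longlonglongrightarrow> 0"
    by (intro tendsto_sandwich[OF _ _ tendsto_const lim] eventually_mono[OF eventually_gt_at_top[of 0]]) simp_all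
qed simp

definition regular_profiles :: "real \<Rightarrow> nat \<Rightarrow> (nat \<Rightarrow> 'c list) set" where
  "regular_profiles \<delta> n = {P. inj_on (score C w n P) C \<and>
     (\<forall>x\<in>C. \<forall>y\<in>C. \<bar>score C w n P x - score C w n P y\<bar> \<le> \<delta> * real n) \<and>
     (\<forall>t\<in>rankings. real n / (2 * card rankings) \<le> real (Ncount n P t))}"

lemma prob_regular_profiles_tendsto_1:
  assumes "\<delta> > 0"
  shows "(\<lambda>n. measure_pmf.prob (pmf_of_set (profiles C n)) (regular_profiles \<delta> n)) \<longlonglongrightarrow> 1"
proof -
  define D where "D = {(x, y) \<in> C \<times> C. x \<noteq> y}"
  have "finite D"
    using finite_C by (auto simp: D_def intro: finite_subset[of _ "C \<times> C"])
  have "(\<lambda>n. measure_pmf.prob (pmf_of_set (profiles C n))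
      (\<Inter>(x, y)\<in>D. {P. score C w n P x \<noteq> score C w n P y})) \<longlonglongrightarrow> 1"
    by (rule tendsto_prob_INT_1[OF \<open>finite D\<close>]) (auto simp: D_def intro: prob_no_tie_tendsto_1)
  moreover have "(\<lambda>n. measure_pmf.prob (pmf_of_set (profiles C n))
      (\<Inter>(x, y)\<in>C \<times> C. {P. \<bar>score C w n P x - score C w n P y\<bar> \<le> \<delta> * real n})) \<longlonglongrightarrow> 1"
    using finite_C by (intro tendsto_prob_INT_1) (auto intro: prob_score_gap_tendsto_1[OF _ _ assms])
  moreover have "(\<lambda>n. measure_pmf.prob (pmf_of_set (profiles C n))
      (\<Inter>t\<in>rankings. {P. real n / (2 * card rankings) \<le> real (Ncount n P t)})) \<longlonglongrightarrow> 1"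
    by (intro tendsto_prob_INT_1 finite_rankings ballI prob_count_tendsto_1)
  moreover have "regular_profiles \<delta> n =
      (\<Inter>(x, y)\<in>D. {P. score C w n P x \<noteq> score C w n P y}) \<inter>
      (\<Inter>(x, y)\<in>C \<times> C. {P. \<bar>score C w n P x - score C w n P y\<bar> \<le> \<delta> * real n}) \<inter>
      (\<Inter>t\<in>rankings. {P. real n / (2 * card rankings) \<le> real (Ncount n P t)})" for n
    unfolding regular_profiles_def D_def inj_on_def by blast
  ultimately show ?thesis
    by (simp only:) (intro tendsto_prob_Int_1)
qed

lemma regular_profiles_subset_good_event:
  assumes n: "4 * card rankings * Kconst (card C) w \<le> real n"
  defines "\<delta> \<equiv> (if w_penult < 1 then (1 - w_penult) / (4 * card rankings) else 1 / (2 * card rankings))"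
  shows "profiles C n \<inter> regular_profiles \<delta> n \<subseteq> good_event C w n"
proof
  fix P
  assume P: "P \<in> profiles C n \<inter> regular_profiles \<delta> n"
  have "(if w_penult < 1 then \<delta> * real n / (1 - w_penult) + Kconst (card C) w else \<delta> * real n)
      \<le> real n / (2 * card rankings)"
  proof (cases "w_penult < 1")
    case True
    then have "\<delta> * real n / (1 - w_penult) = real n / (4 * card rankings)"
      by (simp add: \<delta>_def)
    moreover have "Kconst (card C) w \<le> real n / (4 * card rankings)"
      using n card_rankings_pos by (simp add: field_simps)
    ultimately show ?thesis
      using True by simp
  qed (simp add: \<delta>_def)
  moreover have "inj_on (score C w n P) C"
    "\<forall>x\<in>C. \<forall>y\<in>C. \<bar>score C w n P x - score C w n P y\<bar> \<le> \<delta> * real n"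
    "\<forall>t\<in>rankings. real n / (2 * card rankings) \<le> real (Ncount n P t)"
    using P by (simp_all add: regular_profiles_def)
  ultimately show "P \<in> good_event C w n"
    using P by (intro good_event_if_regular[of P n "\<delta> * real n"]) (auto intro: order_trans)
qed

theorem prob_good_event_tendsto_1:
  "(\<lambda>n. measure_pmf.prob (pmf_of_set (profiles C n)) (good_event C w n)) \<longlonglongrightarrow> 1"
proof -
  define \<delta> where "\<delta> = (if w_penult < 1 then (1 - w_penult) / (4 * card rankings) else 1 / (2 * card rankings))"
  have "\<delta> > 0"
    using card_rankings_pos by (simp add: \<delta>_def)
  have "measure_pmf.prob (pmf_of_set (profiles C n)) (regular_profiles \<delta> n)
      \<le> measure_pmf.prob (pmf_of_set (profiles C n)) (good_event C w n)"
    if "4 * card rankings * Kconst (card C) w \<le> real n" for n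
    using regular_profiles_subset_good_event[OF that] finite_profiles profiles_nonempty
    by (intro prob_pmf_of_set_mono) (auto simp: \<delta>_def)
  then have "\<forall>\<^sub>F n in sequentially. measure_pmf.prob (pmf_of_set (profiles C n)) (regular_profiles \<delta> n)
      \<le> measure_pmf.prob (pmf_of_set (profiles C n)) (good_event C w n)"
    using eventually_ge_at_top[of "nat \<lceil>4 * card rankings * Kconst (card C) w\<rceil>"]
    by (auto elim!: eventually_mono)
  moreover have "\<forall>\<^sub>F n in sequentially. measure_pmf.prob (pmf_of_set (profiles C n)) (good_event C w n) \<le> 1"
    by simp
  ultimately show ?thesis
    by (rule tendsto_sandwich[OF _ _ prob_regular_profiles_tendsto_1[OF \<open>\<delta> > 0\<close>] tendsto_const])
qed

end

theorem corollary6: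
  fixes C :: "'c set" and w :: "nat \<Rightarrow> real"
  assumes "finite C" and "card C \<ge> 3"
    and "w 1 = 1" and "w (card C) = 0"
    and "\<And>i j. 1 \<le> i \<Longrightarrow> i \<le> j \<Longrightarrow> j \<le> card C \<Longrightarrow> w j \<le> w i"
  shows "(\<lambda>n. measure_pmf.prob (pmf_of_set (profiles C n)) (good_event C w n))
           \<longlonglongrightarrow> 1"
proof -
  interpret scoring_rule C w
    using assms by unfold_locales
  show ?thesis
    by (rule prob_good_event_tendsto_1)
qed

end
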